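(* Let $s\in(0,1)$, $\mu$ a nonnegative finite measure on $S^{d-1}$, and $\Omega\subset\mathbb{R}^d$ a bounded domain. Let $u\in L^1(\Omega)\cap L^1(\mathbb{R}^d,\nu^\star(x)\,dx)$ satisfy $\int_{\mathbb{R}^d}u\,A_s\eta\,dx\le0$ for all nonnegative $\eta\in C_c^\infty(\Omega)$, and $u\le0$ a.e. on $\Omega^c$. Fix a radial function $\eta\in C_c^\infty(\mathbb{R}^d)$ with $\mathrm{supp}\,\eta=\overline{B_1(0)}$, $\eta\ge0$, $\|\eta\|_{L^1}=1$, and set $\eta_\varepsilon=\varepsilon^{-d}\eta(\cdot/\varepsilon)$. Then the mollification $u_\varepsilon=u*\eta_\varepsilon$ satisfies, pointwise, $A_su_\varepsilon\le0$ in $\Omega_\varepsilon$ and $u_\varepsilon\le0$ on $(\Omega^\varepsilon)^c$.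
   Context: $A_s u(x)=\lim_{\kappa\to0+}\int_{\{|r|\ge\kappa\}}\int_{S^{d-1}}\frac{u(x)-u(x+r\theta)}{|r|^{1+2s}}\,\mu(d\theta)\,dr$. $\nu^\star(x)=\int_{\mathbb{R}}\int_{S^{d-1}}\mathbf{1}_\Omega(x+r\theta)(1+|r|)^{-1-2s}\,\mu(d\theta)\,dr$. $\Omega_\varepsilon=\{x\in\Omega:\mathrm{dist}(x,\partial\Omega)>\varepsilon\}$, $\Omega^\varepsilon=\{x\in\mathbb{R}^d:\mathrm{dist}(x,\Omega)<\varepsilon\}$. *)

theory Defs
  imports "HOL-Analysis.Analysis"
begin

fun Ck :: "nat \<Rightarrow> ('a::euclidean_space \<Rightarrow> real) \<Rightarrow> bool" where
  "Ck 0 f = continuous_on UNIV f"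
| "Ck (Suc k) f = (f differentiable_on UNIV \<and>
      (\<forall>i\<in>Basis. Ck k (\<lambda>x. frechet_derivative f (at x) i)))"

definition C_inf :: "('a::euclidean_space \<Rightarrow> real) \<Rightarrow> bool" where
  "C_inf f \<longleftrightarrow> (\<forall>k. Ck k f)"

definition tsupp :: "('a::real_normed_vector \<Rightarrow> real) \<Rightarrow> 'a set" where
  "tsupp f = closure {x. f x \<noteq> 0}"

text \<open>f in C_c^infty(Omega) (extended by zero to the whole space).\<close>
definition Cc_inf :: "'a::euclidean_space set \<Rightarrow> ('a \<Rightarrow> real) \<Rightarrow> bool" where
  "Cc_inf \<Omega> f \<longleftrightarrow> C_inf f \<and> compact (tsupp f) \<and> tsupp f \<subseteq> \<Omega>"

definition pv_inner :: "real \<Rightarrow> 'a::euclidean_space measure \<Rightarrow> ('a \<Rightarrow> real) \<Rightarrow> 'a \<Rightarrow> real \<Rightarrow> 'a \<Rightarrow> real" where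
  "pv_inner s \<mu> f x r \<theta> = (f x - f (x + r *\<^sub>R \<theta>)) / \<bar>r\<bar> powr (1 + 2 * s)"

definition pv_trunc :: "real \<Rightarrow> 'a::euclidean_space measure \<Rightarrow> ('a \<Rightarrow> real) \<Rightarrow> 'a \<Rightarrow> real \<Rightarrow> real" where
  "pv_trunc s \<mu> f x \<kappa> =
     (\<integral>r. indicator {r. \<bar>r\<bar> \<ge> \<kappa>} r * (\<integral>\<theta>. pv_inner s \<mu> f x r \<theta> \<partial>\<mu>) \<partial>lborel)"

text \<open>A_s f(x) exists (all truncated iterated integrals are genuine Lebesgue integrals)
  and equals L.\<close>
definition has_As :: "real \<Rightarrow> 'a::euclidean_space measure \<Rightarrow> ('a \<Rightarrow> real) \<Rightarrow> 'a \<Rightarrow> real \<Rightarrow> bool" where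
  "has_As s \<mu> f x L \<longleftrightarrow>
     (\<forall>\<kappa>>0. (AE r in lborel. \<bar>r\<bar> \<ge> \<kappa> \<longrightarrow> integrable \<mu> (pv_inner s \<mu> f x r)) \<and>
             integrable lborel (\<lambda>r. indicator {r. \<bar>r\<bar> \<ge> \<kappa>} r * (\<integral>\<theta>. pv_inner s \<mu> f x r \<theta> \<partial>\<mu>))) \<and>
     (pv_trunc s \<mu> f x \<longlongrightarrow> L) (at_right 0)"

text \<open>The value A_s f(x) (as a limit; used for smooth compactly supported test functions).\<close>
definition As :: "real \<Rightarrow> 'a::euclidean_space measure \<Rightarrow> ('a \<Rightarrow> real) \<Rightarrow> 'a \<Rightarrow> real" where
  "As s \<mu> f x = Lim (at_right 0) (pv_trunc s \<mu> f x)"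

definition nu_star :: "real \<Rightarrow> 'a::euclidean_space measure \<Rightarrow> 'a set \<Rightarrow> 'a \<Rightarrow> real" where
  "nu_star s \<mu> \<Omega> x =
     (\<integral>r. (\<integral>\<theta>. indicator \<Omega> (x + r *\<^sub>R \<theta>) * (1 + \<bar>r\<bar>) powr (-1 - 2 * s) \<partial>\<mu>) \<partial>lborel)"

definition mollify :: "('a::euclidean_space \<Rightarrow> real) \<Rightarrow> real \<Rightarrow> ('a \<Rightarrow> real) \<Rightarrow> 'a \<Rightarrow> real" where
  "mollify \<eta> \<epsilon> u x =
     (\<integral>y. u y * (\<epsilon> powr (- real DIM('a)) * \<eta> ((1 / \<epsilon>) *\<^sub>R (x - y))) \<partial>lebesgue)"

definition inner_set :: "'a::euclidean_space set \<Rightarrow> real \<Rightarrow> 'a set" where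
  "inner_set \<Omega> \<epsilon> = {x \<in> \<Omega>. infdist x (frontier \<Omega>) > \<epsilon>}"

definition outer_set :: "'a::euclidean_space set \<Rightarrow> real \<Rightarrow> 'a set" where
  "outer_set \<Omega> \<epsilon> = {x. infdist x \<Omega> < \<epsilon>}"

end

theory Submission
  imports Defs
begin

text \<open>
  Fix \<open>x \<in> \<Omega>\<^sub>\<epsilon>\<close> and let \<open>\<phi> = \<eta>\<^sub>\<epsilon>(x - _)\<close>, a nonnegative test function supported in the
  closed \<open>\<epsilon>\<close>-ball around \<open>x\<close>. Then \<open>u\<^sub>\<epsilon>(x + r\<theta>) = \<integral> u(y) \<phi>(y - r\<theta>) dy\<close>, so by Fubini the
  operator truncated at \<open>|r| \<ge> \<kappa>\<close> moves onto the test function: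
  \<open>A\<^sup>\<kappa> u\<^sub>\<epsilon>(x) = \<integral> u(y) A\<^sup>\<kappa> \<phi>(y) dy\<close>. Letting \<open>\<kappa> \<rightarrow> 0\<close> by dominated convergence rests on two
  bounds uniform in \<open>\<kappa>\<close>. Symmetrising \<open>r \<mapsto> -r\<close> turns the difference quotient into a second
  difference quotient of size \<open>|r| powr (1 - 2s)\<close> near \<open>0\<close>, so \<open>A\<^sup>\<kappa> \<phi>\<close> is bounded; and for
  \<open>y \<notin> \<Omega>\<close> the support of \<open>\<phi>\<close> keeps distance \<open>dist(x, \<partial>\<Omega>) - \<epsilon>\<close> from \<open>y\<close>, so
  \<open>|A\<^sup>\<kappa> \<phi>(y)| \<le> C \<nu>\<^sup>\<star>(y)\<close>. Since \<open>u\<close> is integrable against \<open>1\<^sub>\<Omega> + \<nu>\<^sup>\<star>\<close>, the limit is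
  \<open>A\<^sub>s u\<^sub>\<epsilon>(x) = \<integral> u A\<^sub>s \<phi> \<le> 0\<close>. Outside \<open>\<Omega>\<^sup>\<epsilon>\<close> the kernel only sees points where \<open>u \<le> 0\<close>.
\<close>

section \<open>Integrals on the real line\<close>

lemma integrable_lborel_if_integrable_on_nonneg:
  fixes f :: "real \<Rightarrow> real"
  assumes "f integrable_on A" and "\<And>x. x \<in> A \<Longrightarrow> 0 \<le> f x"
    and "(\<lambda>x. indicator A x * f x) \<in> borel_measurable borel"
  shows "integrable lborel (\<lambda>x. indicator A x * f x)"
proof -
  have "f absolutely_integrable_on A"
    using assms(1,2) by (rule nonnegative_absolutely_integrable_1)
  then have "integrable lebesgue (\<lambda>x. indicator A x * f x)"
    by (simp add: set_integrable_def)
  then show ?thesis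
    using assms(3) by (subst integrable_completion[symmetric]) auto
qed

lemma integrable_lborel_comp_abs:
  fixes f :: "real \<Rightarrow> real"
  assumes f_meas[measurable]: "f \<in> borel_measurable borel" and f_int: "integrable lborel f"
  shows "integrable lborel (\<lambda>x. f \<bar>x\<bar>)"
proof -
  have "integrable lborel (\<lambda>x. f (0 + (-1) * x))"
    by (rule lborel_integrable_real_affine[OF f_int]) simp
  then have "integrable lborel (\<lambda>x. \<bar>f x\<bar> + \<bar>f (- x)\<bar>)"
    using f_int by (intro Bochner_Integration.integrable_add integrable_abs) simp_all
  moreover have "(\<lambda>x. f \<bar>x\<bar>) \<in> borel_measurable lborel"
    by measurable
  moreover have "AE x in lborel. norm (f \<bar>x\<bar>) \<le> norm (\<bar>f x\<bar> + \<bar>f (- x)\<bar>)"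
    by (intro AE_I2) (cases "x < 0", auto)
  ultimately show ?thesis
    by (rule Bochner_Integration.integrable_bound)
qed

lemma integrable_abs_powr_tail:
  fixes p :: real
  assumes "p > 1"
  shows "integrable lborel (\<lambda>r::real. indicator {r. 1 \<le> \<bar>r\<bar>} r * \<bar>r\<bar> powr (- p))"
proof -
  have "(\<lambda>x::real. x powr (- p)) integrable_on {1..}"
    using has_integral_powr_to_inf[of "- p" 1] assms by (auto simp: integrable_on_def)
  then have "integrable lborel (\<lambda>x::real. indicator {1..} x * x powr (- p))"
    by (rule integrable_lborel_if_integrable_on_nonneg) auto
  from integrable_lborel_comp_abs[OF _ this] show ?thesis
    by (simp add: indicator_def)
qed

lemma integrable_abs_powr_head:
  fixes q :: real
  assumes "q > -1"
  shows "integrable lborel (\<lambda>r::real. indicator {r. \<bar>r\<bar> \<le> 1} r * \<bar>r\<bar> powr q)"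
proof -
  have "(\<lambda>x::real. x powr q) integrable_on {0..1}"
    using integrable_on_powr_from_0[of q 1] assms by auto
  then have "integrable lborel (\<lambda>x::real. indicator {0..1} x * x powr q)"
    by (rule integrable_lborel_if_integrable_on_nonneg) auto
  from integrable_lborel_comp_abs[OF _ this] show ?thesis
    by (simp add: indicator_def)
qed

lemma integrable_one_plus_abs_powr:
  fixes p :: real
  assumes p: "p > 1"
  shows "integrable lborel (\<lambda>r::real. (1 + \<bar>r\<bar>) powr (- p))"
proof -
  have "integrable lborel (\<lambda>r::real. indicator {-1..1} r + indicator {r. 1 \<le> \<bar>r\<bar>} r * \<bar>r\<bar> powr (- p))"
    using integrable_abs_powr_tail[OF p] by (intro Bochner_Integration.integrable_add) auto
  then show ?thesis
  proof (rule Bochner_Integration.integrable_bound)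
    show "AE r in lborel. norm ((1 + \<bar>r\<bar>) powr (- p))
            \<le> norm (indicator {-1..1} r + indicator {r. 1 \<le> \<bar>r\<bar>} r * \<bar>r\<bar> powr (- p) :: real)"
    proof (rule AE_I2)
      fix r :: real
      have "(1 + \<bar>r\<bar>) powr (- p) \<le> 1"
        using powr_mono2'[of "- p" 1 "1 + \<bar>r\<bar>"] p by simp
      moreover have "(1 + \<bar>r\<bar>) powr (- p) \<le> \<bar>r\<bar> powr (- p)" if "1 \<le> \<bar>r\<bar>"
        using p that by (intro powr_mono2') auto
      ultimately show "norm ((1 + \<bar>r\<bar>) powr (- p))
            \<le> norm (indicator {-1..1} r + indicator {r. 1 \<le> \<bar>r\<bar>} r * \<bar>r\<bar> powr (- p) :: real)"
        by (cases "\<bar>r\<bar> \<le> 1") (auto simp: indicator_def)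
    qed
  qed simp
qed

lemma powr_neg_le_one_plus_powr_neg:
  fixes t \<delta> p :: real
  assumes "0 < \<delta>" "\<delta> \<le> t" "0 \<le> p"
  shows "t powr (- p) \<le> ((1 + \<delta>) / \<delta>) powr p * (1 + t) powr (- p)"
proof -
  have t: "t > 0" using assms by auto
  have "((1 + t) / t) powr p \<le> ((1 + \<delta>) / \<delta>) powr p"
    using assms t by (intro powr_mono2) (auto simp: field_simps)
  moreover have "((1 + t) / t) powr p * (1 + t) powr (- p) = t powr (- p)"
    using t by (simp add: powr_divide powr_minus field_simps)
  ultimately show ?thesis
    by (metis mult_right_mono powr_ge_zero)
qed

definition trunc_kernel :: "real \<Rightarrow> real \<Rightarrow> real \<Rightarrow> real" where
  "trunc_kernel s \<kappa> r = indicator {r. \<kappa> \<le> \<bar>r\<bar>} r / \<bar>r\<bar> powr (1 + 2 * s)"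

lemma borel_measurable_trunc_kernel[measurable]: "trunc_kernel s \<kappa> \<in> borel_measurable borel"
  unfolding trunc_kernel_def[abs_def] by measurable

lemma trunc_kernel_nonneg: "0 \<le> trunc_kernel s \<kappa> r"
  by (simp add: trunc_kernel_def)

lemma trunc_kernel_le:
  assumes "0 < \<kappa>" "0 \<le> 1 + 2 * s"
  shows "trunc_kernel s \<kappa> r \<le> ((1 + \<kappa>) / \<kappa>) powr (1 + 2 * s) * (1 + \<bar>r\<bar>) powr (- 1 - 2 * s)"
proof (cases "\<kappa> \<le> \<bar>r\<bar>")
  case True
  have "trunc_kernel s \<kappa> r = \<bar>r\<bar> powr (- (1 + 2 * s))"
    using True by (simp add: trunc_kernel_def powr_minus divide_inverse del: minus_add_distrib)
  also have "\<dots> \<le> ((1 + \<kappa>) / \<kappa>) powr (1 + 2 * s) * (1 + \<bar>r\<bar>) powr (- (1 + 2 * s))"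
    using powr_neg_le_one_plus_powr_neg[OF assms(1) True assms(2)] .
  finally show ?thesis by simp
qed (simp add: trunc_kernel_def)

lemma integrable_trunc_kernel:
  assumes "0 < \<kappa>" "0 < s"
  shows "integrable lborel (trunc_kernel s \<kappa>)"
proof (rule Bochner_Integration.integrable_bound)
  show "integrable lborel (\<lambda>r. ((1 + \<kappa>) / \<kappa>) powr (1 + 2 * s) * (1 + \<bar>r\<bar>) powr (- (1 + 2 * s)))"
    using integrable_one_plus_abs_powr[of "1 + 2 * s"] assms by simp
  show "AE r in lborel. norm (trunc_kernel s \<kappa> r)
          \<le> norm (((1 + \<kappa>) / \<kappa>) powr (1 + 2 * s) * (1 + \<bar>r\<bar>) powr (- (1 + 2 * s)))"
    using trunc_kernel_le[OF assms(1)] assms(2) trunc_kernel_nonneg by (intro AE_I2) simp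
qed simp

lemma trunc_kernel_minus[simp]: "trunc_kernel s \<kappa> (- r) = trunc_kernel s \<kappa> r"
  by (simp add: trunc_kernel_def indicator_def)

lemma pv_trunc_eq_trunc_kernel:
  "pv_trunc s \<mu> f x \<kappa> = (\<integral>r. (\<integral>\<theta>. trunc_kernel s \<kappa> r * (f x - f (x + r *\<^sub>R \<theta>)) \<partial>\<mu>) \<partial>lborel)"
  by (simp add: pv_trunc_def pv_inner_def trunc_kernel_def)

lemma pv_trunc_eq_trunc_kernel_reflected:
  "pv_trunc s \<mu> f x \<kappa> = (\<integral>r. (\<integral>\<theta>. trunc_kernel s \<kappa> r * (f x - f (x - r *\<^sub>R \<theta>)) \<partial>\<mu>) \<partial>lborel)"
  unfolding pv_trunc_eq_trunc_kernel
  using lborel_integral_real_affine[of "-1" "\<lambda>r. \<integral>\<theta>. trunc_kernel s \<kappa> r * (f x - f (x + r *\<^sub>R \<theta>)) \<partial>\<mu>" 0]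
  by simp

section \<open>Second differences of smooth functions\<close>

lemma Ck_affine_comp:
  fixes f :: "'a::euclidean_space \<Rightarrow> real"
  assumes "Ck k f"
  shows "Ck k (\<lambda>y. c * f (a *\<^sub>R y + b))"
  using assms
proof (induction k arbitrary: c f)
  case 0
  then have "continuous_on UNIV f" by simp
  have "continuous_on UNIV (\<lambda>y. f (a *\<^sub>R y + b))"
    by (rule continuous_on_compose2[OF \<open>continuous_on UNIV f\<close>]) (auto intro!: continuous_intros)
  then show ?case by (auto intro!: continuous_intros)
next
  case (Suc k)
  then have dif: "f differentiable_on UNIV" and ih: "\<And>i. i \<in> Basis \<Longrightarrow> Ck k (\<lambda>x. frechet_derivative f (at x) i)"
    by auto
  have fd: "(f has_derivative frechet_derivative f (at z)) (at z)" for z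
    using dif by (simp add: differentiable_on_def frechet_derivative_works)
  have hd: "((\<lambda>y. c * f (a *\<^sub>R y + b)) has_derivative (\<lambda>h. c * frechet_derivative f (at (a *\<^sub>R y + b)) (a *\<^sub>R h))) (at y)" for y
  proof -
    have "((\<lambda>y. a *\<^sub>R y + b) has_derivative (\<lambda>h. a *\<^sub>R h)) (at y)"
      by (auto intro!: derivative_eq_intros)
    from has_derivative_compose[OF this fd]
    have "((\<lambda>y. f (a *\<^sub>R y + b)) has_derivative (\<lambda>h. frechet_derivative f (at (a *\<^sub>R y + b)) (a *\<^sub>R h))) (at y)" .
    then show ?thesis by (rule has_derivative_mult_right)
  qed
  have lin: "linear (frechet_derivative f (at z))" for z
    using fd has_derivative_linear by blast
  have eq: "frechet_derivative (\<lambda>y. c * f (a *\<^sub>R y + b)) (at y) i = (c * a) * frechet_derivative f (at (a *\<^sub>R y + b)) i" for y i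
  proof -
    have "frechet_derivative (\<lambda>y. c * f (a *\<^sub>R y + b)) (at y) = (\<lambda>h. c * frechet_derivative f (at (a *\<^sub>R y + b)) (a *\<^sub>R h))"
      using frechet_derivative_at[OF hd[of y]] by simp
    then show ?thesis using lin[of "a *\<^sub>R y + b"] by (simp add: linear_scale)
  qed
  have "(\<lambda>y. c * f (a *\<^sub>R y + b)) differentiable_on UNIV"
    using hd by (auto simp: differentiable_on_def differentiable_def)
  moreover have "Ck k (\<lambda>x. frechet_derivative (\<lambda>y. c * f (a *\<^sub>R y + b)) (at x) i)" if "i \<in> Basis" for i
    unfolding eq using Suc.IH[OF ih[OF that], of "c * a"] by simp
  ultimately show ?case by simp
qed

lemma C_inf_scaled_reflection:
  assumes "C_inf \<eta>"
  shows "C_inf (\<lambda>y. c * \<eta> (a *\<^sub>R (x - y)))"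
proof -
  have "(\<lambda>y. c * \<eta> (a *\<^sub>R (x - y))) = (\<lambda>y. c * \<eta> ((- a) *\<^sub>R y + a *\<^sub>R x))"
    by (simp add: fun_eq_iff algebra_simps)
  then show ?thesis
    using assms Ck_affine_comp unfolding C_inf_def by metis
qed

lemma has_real_derivative_along_line:
  fixes F :: "'a::euclidean_space \<Rightarrow> real"
  assumes "(F has_derivative F') (at (y + t *\<^sub>R \<theta>))"
  shows "((\<lambda>t. F (y + t *\<^sub>R \<theta>)) has_real_derivative (\<Sum>i\<in>Basis. (\<theta> \<bullet> i) * F' i)) (at t)"
proof -
  have "((\<lambda>t. y + t *\<^sub>R \<theta>) has_derivative (\<lambda>h. h *\<^sub>R \<theta>)) (at t)"
    by (auto intro!: derivative_eq_intros)
  from has_derivative_compose[OF this assms]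
  have "((\<lambda>t. F (y + t *\<^sub>R \<theta>)) has_derivative (\<lambda>h. F' (h *\<^sub>R \<theta>))) (at t)" .
  moreover have "F' (h *\<^sub>R \<theta>) = h * (\<Sum>i\<in>Basis. (\<theta> \<bullet> i) * F' i)" for h
    using Linear_Algebra.linear_componentwise[OF has_derivative_linear[OF assms], of "h *\<^sub>R \<theta>" 1]
    by (simp add: sum_distrib_left mult_ac)
  ultimately show ?thesis
    by (simp add: has_field_derivative_def mult_commute_abs)
qed

lemma abs_sum_Basis_inner_mult_le:
  fixes \<theta> :: "'a::euclidean_space"
  assumes "\<And>i. i \<in> Basis \<Longrightarrow> \<bar>a i\<bar> \<le> A"
  shows "\<bar>\<Sum>i\<in>Basis. (\<theta> \<bullet> i) * a i\<bar> \<le> real DIM('a) * norm \<theta> * A"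
proof -
  obtain b :: 'a where "b \<in> Basis" using nonempty_Basis by blast
  then have "0 \<le> A" using assms[of b] by linarith
  have "\<bar>\<Sum>i\<in>Basis. (\<theta> \<bullet> i) * a i\<bar> \<le> (\<Sum>i\<in>Basis. \<bar>\<theta> \<bullet> i\<bar> * \<bar>a i\<bar>)"
    by (rule order_trans[OF sum_abs]) (simp add: abs_mult)
  also have "\<dots> \<le> (\<Sum>i\<in>(Basis::'a set). norm \<theta> * A)"
    using \<open>0 \<le> A\<close> assms by (intro sum_mono mult_mono) (auto simp: Basis_le_norm)
  finally show ?thesis by simp
qed

lemma second_difference_le:
  fixes g g' g'' :: "real \<Rightarrow> real"
  assumes "\<And>t. (g has_real_derivative g' t) (at t)"
    and "\<And>t. (g' has_real_derivative g'' t) (at t)"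
    and "\<And>t. \<bar>g'' t\<bar> \<le> K"
  shows "\<bar>g r + g (- r) - 2 * g 0\<bar> \<le> K * r\<^sup>2"
proof -
  define diff where "diff m = (if m = 0 then g else if m = 1 then g' else g'')" for m :: nat
  have diff0: "diff 0 = g" by (simp add: diff_def)
  have "\<forall>m t. m < 2 \<and> \<bar>t\<bar> \<le> \<bar>x\<bar> \<longrightarrow> (diff m has_real_derivative diff (Suc m) t) (at t)" for x
    using assms(1,2) by (auto simp: diff_def less_2_cases_iff)
  note Maclaurin = Maclaurin_bi_le[OF diff0 this]
  obtain t1 where t1: "g r = g 0 + g' 0 * r + g'' t1 / 2 * r\<^sup>2"
    using Maclaurin[of r] by (auto simp: diff_def eval_nat_numeral)
  obtain t2 where t2: "g (- r) = g 0 - g' 0 * r + g'' t2 / 2 * r\<^sup>2"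
    using Maclaurin[of "- r"] by (auto simp: diff_def eval_nat_numeral)
  have "g r + g (- r) - 2 * g 0 = (g'' t1 + g'' t2) / 2 * r\<^sup>2"
    using t1 t2 by (simp add: algebra_simps)
  then have "\<bar>g r + g (- r) - 2 * g 0\<bar> = \<bar>g'' t1 + g'' t2\<bar> / 2 * r\<^sup>2"
    by (simp only: abs_mult abs_divide) simp
  also have "\<dots> \<le> K * r\<^sup>2"
    using assms(3)[of t1] assms(3)[of t2] by (intro mult_right_mono) auto
  finally show ?thesis .
qed

lemma second_difference_le_second_derivatives:
  fixes \<phi> :: "'a::euclidean_space \<Rightarrow> real"
  assumes d0: "\<And>z. (\<phi> has_derivative frechet_derivative \<phi> (at z)) (at z)"
    and d1: "\<And>i z. i \<in> Basis \<Longrightarrow> ((\<lambda>w. frechet_derivative \<phi> (at w) i) has_derivative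
              frechet_derivative (\<lambda>w. frechet_derivative \<phi> (at w) i) (at z)) (at z)"
    and bound: "\<And>i j z. i \<in> Basis \<Longrightarrow> j \<in> Basis \<Longrightarrow>
              \<bar>frechet_derivative (\<lambda>w. frechet_derivative \<phi> (at w) i) (at z) j\<bar> \<le> B"
  shows "\<bar>\<phi> (y + r *\<^sub>R \<theta>) + \<phi> (y - r *\<^sub>R \<theta>) - 2 * \<phi> y\<bar> \<le> (real DIM('a) * norm \<theta>)\<^sup>2 * B * r\<^sup>2"
proof -
  define D2 where "D2 i j w = frechet_derivative (\<lambda>w. frechet_derivative \<phi> (at w) i) (at w) j" for i j w
  define g' where "g' t = (\<Sum>i\<in>Basis. (\<theta> \<bullet> i) * frechet_derivative \<phi> (at (y + t *\<^sub>R \<theta>)) i)" for t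
  define g'' where "g'' t = (\<Sum>i\<in>Basis. (\<theta> \<bullet> i) * (\<Sum>j\<in>Basis. (\<theta> \<bullet> j) * D2 i j (y + t *\<^sub>R \<theta>)))" for t
  have "((\<lambda>t. \<phi> (y + t *\<^sub>R \<theta>)) has_real_derivative g' t) (at t)" for t
    unfolding g'_def by (rule has_real_derivative_along_line[OF d0])
  moreover have "(g' has_real_derivative g'' t) (at t)" for t
    unfolding g'_def g''_def D2_def
    by (intro DERIV_sum DERIV_cmult has_real_derivative_along_line d1)
  moreover have "\<bar>g'' t\<bar> \<le> (real DIM('a) * norm \<theta>)\<^sup>2 * B" for t
  proof -
    have "\<bar>\<Sum>j\<in>Basis. (\<theta> \<bullet> j) * D2 i j (y + t *\<^sub>R \<theta>)\<bar> \<le> real DIM('a) * norm \<theta> * B"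
      if "i \<in> Basis" for i
      using that by (intro abs_sum_Basis_inner_mult_le) (simp add: D2_def bound)
    then have "\<bar>g'' t\<bar> \<le> real DIM('a) * norm \<theta> * (real DIM('a) * norm \<theta> * B)"
      unfolding g''_def by (rule abs_sum_Basis_inner_mult_le)
    then show ?thesis by (simp add: power2_eq_square mult_ac)
  qed
  ultimately show ?thesis
    using second_difference_le[of "\<lambda>t. \<phi> (y + t *\<^sub>R \<theta>)" g' g''] by simp
qed

lemma frechet_derivative_eq_0_if_locally_0:
  fixes F :: "'a::euclidean_space \<Rightarrow> real"
  assumes "open U" "z \<in> U" "\<And>w. w \<in> U \<Longrightarrow> F w = 0"
  shows "frechet_derivative F (at z) h = 0"
proof -
  have "(F has_derivative (\<lambda>h. 0)) (at z)"
    by (rule has_derivative_transform_within_open[OF has_derivative_const assms(1,2)])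
       (use assms(3) in auto)
  then show ?thesis by (simp add: frechet_derivative_at[symmetric])
qed

lemma bounded_range_vanishing_outside_compact:
  fixes F :: "'a::topological_space \<Rightarrow> 'b::real_normed_vector"
  assumes "continuous_on UNIV F" "compact K" "\<And>w. w \<notin> K \<Longrightarrow> F w = 0"
  shows "bounded (range F)"
proof (rule bounded_subset)
  show "bounded (insert 0 (F ` K))"
    using compact_imp_bounded[OF compact_continuous_image[OF continuous_on_subset[OF assms(1)] assms(2)]]
    by simp
  show "range F \<subseteq> insert 0 (F ` K)"
    using assms(3) by auto
qed

lemma Ck2_vanishing_outside_compact_second_difference_le:
  fixes f :: "'a::euclidean_space \<Rightarrow> real"
  assumes "Ck 2 f" "compact K" and vanish: "\<And>w. w \<notin> K \<Longrightarrow> f w = 0"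
  shows "\<exists>M. \<forall>y r \<theta>. \<bar>f (y + r *\<^sub>R \<theta>) + f (y - r *\<^sub>R \<theta>) - 2 * f y\<bar> \<le> M * (norm \<theta>)\<^sup>2 * r\<^sup>2"
proof -
  define D2 where "D2 i j z = frechet_derivative (\<lambda>w. frechet_derivative f (at w) i) (at z) j" for i j z
  have ck2: "f differentiable_on UNIV"
    "\<And>i. i \<in> Basis \<Longrightarrow> (\<lambda>w. frechet_derivative f (at w) i) differentiable_on UNIV"
    "\<And>i j. i \<in> Basis \<Longrightarrow> j \<in> Basis \<Longrightarrow> continuous_on UNIV (D2 i j)"
    using assms(1) by (auto simp: numeral_2_eq_2 D2_def[abs_def])
  have U: "open (- K)" using compact_imp_closed[OF assms(2)] by auto
  have D1_0: "frechet_derivative f (at w) i = 0" if "w \<in> - K" for w i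
    by (rule frechet_derivative_eq_0_if_locally_0[OF U that]) (use vanish in auto)
  have "D2 i j z = 0" if "z \<notin> K" for z i j
    unfolding D2_def by (rule frechet_derivative_eq_0_if_locally_0[OF U]) (use that D1_0 in auto)
  then have "bounded (range (D2 i j))" if "i \<in> Basis" "j \<in> Basis" for i j
    using bounded_range_vanishing_outside_compact[OF ck2(3)[OF that] assms(2)] by blast
  then have "bounded (\<Union>i\<in>Basis. \<Union>j\<in>Basis. range (D2 i j))"
    by (intro bounded_UN ballI) auto
  then obtain B where B: "\<And>i j z. i \<in> Basis \<Longrightarrow> j \<in> Basis \<Longrightarrow> \<bar>D2 i j z\<bar> \<le> B"
    unfolding bounded_iff by fastforce
  have d0: "(f has_derivative frechet_derivative f (at z)) (at z)" for z
    using ck2(1) by (simp add: differentiable_on_def frechet_derivative_works)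
  have d1: "((\<lambda>w. frechet_derivative f (at w) i) has_derivative
              frechet_derivative (\<lambda>w. frechet_derivative f (at w) i) (at z)) (at z)" if "i \<in> Basis" for i z
    using ck2(2)[OF that] by (simp add: differentiable_on_def frechet_derivative_works)
  have "\<bar>f (y + r *\<^sub>R \<theta>) + f (y - r *\<^sub>R \<theta>) - 2 * f y\<bar> \<le> (real DIM('a)^2 * B) * (norm \<theta>)\<^sup>2 * r\<^sup>2"
    for y r \<theta>
    using second_difference_le_second_derivatives[OF d0 d1 B[unfolded D2_def], of y r \<theta>]
    by (simp add: power_mult_distrib mult_ac)
  then show ?thesis by blast
qed

section \<open>The truncated operator on a test function\<close>

lemma integrable_fst_finite_measure:
  fixes f :: "'b \<Rightarrow> real"
  assumes "sigma_finite_measure M" and "finite_measure N" and f: "integrable M f"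
  shows "integrable (M \<Otimes>\<^sub>M N) (\<lambda>p. f (fst p))"
proof -
  interpret N: finite_measure N by fact
  interpret pair_sigma_finite M N
    by (intro pair_sigma_finite.intro assms(1) N.sigma_finite_measure_axioms)
  have [measurable]: "f \<in> borel_measurable M"
    using f by simp
  show ?thesis
  proof (rule Fubini_integrable)
    show "integrable M (\<lambda>x. \<integral>y. norm (f (fst (x, y))) \<partial>N)"
      using f by simp
  qed simp_all
qed

lemma nu_star_nonneg: "0 \<le> nu_star s \<mu> \<Omega> y"
  unfolding nu_star_def by (intro Bochner_Integration.integral_nonneg) (simp add: indicator_def)

lemma abs_integral_le_integral:
  fixes f g :: "'b \<Rightarrow> real"
  assumes "integrable M g" "AE x in M. \<bar>f x\<bar> \<le> g x"
  shows "\<bar>integral\<^sup>L M f\<bar> \<le> integral\<^sup>L M g"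
proof -
  have "\<bar>integral\<^sup>L M f\<bar> \<le> (\<integral>x. \<bar>f x\<bar> \<partial>M)"
    using integral_norm_bound[of M f] by simp
  also have "\<dots> \<le> integral\<^sup>L M g"
    by (rule integral_mono_AE'[OF assms(1)]) (use assms(2) in \<open>auto elim: AE_mp\<close>)
  finally show ?thesis .
qed

locale bounded_second_difference =
  fixes s :: real and \<mu> :: "'a::euclidean_space measure" and \<phi> :: "'a \<Rightarrow> real" and \<Phi> M :: real
  assumes s_pos: "0 < s" and s_less_1: "s < 1"
    and sets_mu: "sets \<mu> = sets borel" and finite_mu: "finite_measure \<mu>"
    and AE_unit: "AE \<theta> in \<mu>. norm \<theta> = 1"
    and phi_meas: "\<phi> \<in> borel_measurable borel"
    and phi_bound: "\<And>z. \<bar>\<phi> z\<bar> \<le> \<Phi>"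
    and phi_second_difference:
      "\<And>y r \<theta>. \<bar>\<phi> (y + r *\<^sub>R \<theta>) + \<phi> (y - r *\<^sub>R \<theta>) - 2 * \<phi> y\<bar> \<le> M * (norm \<theta>)\<^sup>2 * r\<^sup>2"
begin

declare sets_mu[measurable_cong] phi_meas[measurable]

sublocale mu: finite_measure \<mu>
  by (rule finite_mu)

abbreviation mass :: real where
  "mass \<equiv> measure \<mu> (space \<mu>)"

lemma Phi_nonneg: "0 \<le> \<Phi>"
  using phi_bound[of 0] by linarith

lemma M_nonneg: "0 \<le> M"
proof -
  obtain b :: 'a where "b \<in> Basis" using nonempty_Basis by blast
  then have "\<bar>\<phi> b + \<phi> (- b) - 2 * \<phi> 0\<bar> \<le> M"
    using phi_second_difference[of 0 1 b] by simp
  then show ?thesis by linarith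
qed

definition direction_integral :: "'a \<Rightarrow> real \<Rightarrow> real" where
  "direction_integral y r = (\<integral>\<theta>. pv_inner s \<mu> \<phi> y r \<theta> \<partial>\<mu>)"

lemma borel_measurable_direction_integral[measurable]: "direction_integral y \<in> borel_measurable borel"
  unfolding direction_integral_def[abs_def] pv_inner_def by measurable

lemma pv_trunc_eq_direction_integral: "pv_trunc s \<mu> \<phi> y \<kappa> = (\<integral>r. indicator {r. \<kappa> \<le> \<bar>r\<bar>} r * direction_integral y r \<partial>lborel)"
  by (simp add: pv_trunc_def direction_integral_def)

lemma abs_pv_inner_le: "\<bar>pv_inner s \<mu> \<phi> y r \<theta>\<bar> \<le> 2 * \<Phi> / \<bar>r\<bar> powr (1 + 2 * s)"
proof -
  have "\<bar>\<phi> y - \<phi> (y + r *\<^sub>R \<theta>)\<bar> \<le> 2 * \<Phi>"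
    using phi_bound[of y] phi_bound[of "y + r *\<^sub>R \<theta>"] by linarith
  then show ?thesis by (simp add: pv_inner_def divide_right_mono)
qed

lemma integrable_pv_inner: "integrable \<mu> (pv_inner s \<mu> \<phi> y r)"
  by (rule mu.integrable_const_bound[where B="2 * \<Phi> / \<bar>r\<bar> powr (1 + 2 * s)"])
     (use abs_pv_inner_le in \<open>auto simp: pv_inner_def[abs_def]\<close>)

lemma abs_direction_integral_le: "\<bar>direction_integral y r\<bar> \<le> mass * (2 * \<Phi> / \<bar>r\<bar> powr (1 + 2 * s))"
proof -
  have "\<bar>direction_integral y r\<bar> \<le> (\<integral>\<theta>. 2 * \<Phi> / \<bar>r\<bar> powr (1 + 2 * s) \<partial>\<mu>)"
    unfolding direction_integral_def by (rule abs_integral_le_integral) (auto intro: abs_pv_inner_le)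
  then show ?thesis by simp
qed

definition second_difference_majorant :: "real \<Rightarrow> real" where
  "second_difference_majorant r = M * (indicator {r. \<bar>r\<bar> \<le> 1} r * \<bar>r\<bar> powr (1 - 2 * s))
     + 4 * \<Phi> * (indicator {r. 1 \<le> \<bar>r\<bar>} r * \<bar>r\<bar> powr (- (1 + 2 * s)))"

lemma integrable_second_difference_majorant: "integrable lborel second_difference_majorant"
  unfolding second_difference_majorant_def
  using integrable_abs_powr_head[of "1 - 2 * s"] integrable_abs_powr_tail[of "1 + 2 * s"] s_pos s_less_1
  by auto

lemma second_difference_majorant_nonneg: "0 \<le> second_difference_majorant r"
  unfolding second_difference_majorant_def using M_nonneg Phi_nonneg by auto

lemma abs_pv_inner_symmetric_le:
  assumes "norm \<theta> = 1"
  shows "\<bar>pv_inner s \<mu> \<phi> y r \<theta> + pv_inner s \<mu> \<phi> y (- r) \<theta>\<bar> \<le> second_difference_majorant r"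
proof (cases "r = 0")
  case True
  then show ?thesis using second_difference_majorant_nonneg[of 0] by (simp add: pv_inner_def)
next
  case False
  define p where "p = 1 + 2 * s"
  define N where "N = \<phi> (y + r *\<^sub>R \<theta>) + \<phi> (y - r *\<^sub>R \<theta>) - 2 * \<phi> y"
  have rp: "\<bar>r\<bar> powr p > 0" using False by simp
  have "pv_inner s \<mu> \<phi> y r \<theta> + pv_inner s \<mu> \<phi> y (- r) \<theta> = - N / \<bar>r\<bar> powr p"
    using rp by (simp add: pv_inner_def p_def N_def field_simps)
  then have eq: "\<bar>pv_inner s \<mu> \<phi> y r \<theta> + pv_inner s \<mu> \<phi> y (- r) \<theta>\<bar> = \<bar>N\<bar> / \<bar>r\<bar> powr p"
    by (simp add: abs_divide)
  show ?thesis
  proof (cases "\<bar>r\<bar> \<le> 1")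
    case True
    have "\<bar>N\<bar> \<le> M * r\<^sup>2"
      using phi_second_difference[of y r \<theta>] assms by (simp add: N_def)
    then have "\<bar>N\<bar> / \<bar>r\<bar> powr p \<le> M * (\<bar>r\<bar> powr 2 / \<bar>r\<bar> powr p)"
      using rp False by (simp add: divide_right_mono powr_realpow)
    also have "\<bar>r\<bar> powr 2 / \<bar>r\<bar> powr p = \<bar>r\<bar> powr (1 - 2 * s)"
      by (simp only: powr_diff[symmetric]) (simp add: p_def)
    finally show ?thesis
      using True Phi_nonneg by (simp add: eq second_difference_majorant_def add_increasing2)
  next
    case False
    have "\<bar>N\<bar> \<le> 4 * \<Phi>"
      using phi_bound[of y] phi_bound[of "y + r *\<^sub>R \<theta>"] phi_bound[of "y - r *\<^sub>R \<theta>"]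
      by (simp add: N_def)
    then have "\<bar>N\<bar> / \<bar>r\<bar> powr p \<le> 4 * \<Phi> * \<bar>r\<bar> powr (- p)"
      using rp by (simp add: divide_right_mono powr_minus divide_inverse)
    then show ?thesis
      using False M_nonneg by (simp add: eq second_difference_majorant_def p_def)
  qed
qed

definition sym_direction_integral :: "'a \<Rightarrow> real \<Rightarrow> real" where
  "sym_direction_integral y r = (direction_integral y r + direction_integral y (- r)) / 2"

lemma borel_measurable_sym_direction_integral[measurable]: "sym_direction_integral y \<in> borel_measurable borel"
  unfolding sym_direction_integral_def[abs_def] by measurable

lemma abs_sym_direction_integral_le: "\<bar>sym_direction_integral y r\<bar> \<le> mass * second_difference_majorant r / 2"
proof -
  have "\<bar>direction_integral y r + direction_integral y (- r)\<bar> = \<bar>\<integral>\<theta>. pv_inner s \<mu> \<phi> y r \<theta> + pv_inner s \<mu> \<phi> y (- r) \<theta> \<partial>\<mu>\<bar>"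
    by (simp add: direction_integral_def integrable_pv_inner)
  also have "\<dots> \<le> (\<integral>\<theta>. second_difference_majorant r \<partial>\<mu>)"
    by (rule abs_integral_le_integral) (use AE_unit abs_pv_inner_symmetric_le in \<open>auto elim: AE_mp\<close>)
  finally show ?thesis by (simp add: sym_direction_integral_def)
qed

lemma pv_trunc_eq_sym_direction_integral:
  assumes "0 < \<kappa>"
  shows "pv_trunc s \<mu> \<phi> y \<kappa> = (\<integral>r. indicator {r. \<kappa> \<le> \<bar>r\<bar>} r * sym_direction_integral y r \<partial>lborel)"
proof -
  define f where "f r = indicator {r. \<kappa> \<le> \<bar>r\<bar>} r * direction_integral y r" for r
  have "integrable lborel (\<lambda>r. mass * (2 * \<Phi>) * trunc_kernel s \<kappa> r)"
    using integrable_trunc_kernel[OF assms s_pos] by simp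
  then have f_int: "integrable lborel f"
  proof (rule Bochner_Integration.integrable_bound)
    show "AE r in lborel. norm (f r) \<le> norm (mass * (2 * \<Phi>) * trunc_kernel s \<kappa> r)"
      using abs_direction_integral_le[of y] Phi_nonneg
      by (intro AE_I2) (auto simp: f_def trunc_kernel_def indicator_def)
  qed (unfold f_def[abs_def], measurable)
  have f_reflected_int: "integrable lborel (\<lambda>r. f (0 + (-1) * r))"
    by (rule lborel_integrable_real_affine[OF f_int]) simp
  have "(\<integral>r. indicator {r. \<kappa> \<le> \<bar>r\<bar>} r * sym_direction_integral y r \<partial>lborel) = (\<integral>r. (f r + f (0 + (-1) * r)) / 2 \<partial>lborel)"
    by (rule Bochner_Integration.integral_cong) (auto simp: f_def sym_direction_integral_def indicator_def)
  also have "\<dots> = ((\<integral>r. f r \<partial>lborel) + (\<integral>r. f (0 + (-1) * r) \<partial>lborel)) / 2"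
    using f_int f_reflected_int by simp
  also have "\<dots> = (\<integral>r. f r \<partial>lborel)"
    using lborel_integral_real_affine[of "-1" f 0] by simp
  finally show ?thesis by (simp add: f_def pv_trunc_eq_direction_integral)
qed

lemma pv_trunc_bounded: "\<exists>C. \<forall>y \<kappa>. 0 < \<kappa> \<longrightarrow> \<bar>pv_trunc s \<mu> \<phi> y \<kappa>\<bar> \<le> C"
proof (intro exI allI impI)
  fix y and \<kappa> :: real
  assume "0 < \<kappa>"
  show "\<bar>pv_trunc s \<mu> \<phi> y \<kappa>\<bar> \<le> (\<integral>r. mass * second_difference_majorant r / 2 \<partial>lborel)"
    unfolding pv_trunc_eq_sym_direction_integral[OF \<open>0 < \<kappa>\<close>]
    using integrable_second_difference_majorant abs_sym_direction_integral_le[of y] second_difference_majorant_nonneg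
    by (intro abs_integral_le_integral AE_I2) (auto simp: indicator_def)
qed

lemma pv_trunc_tendsto: "(pv_trunc s \<mu> \<phi> y \<longlongrightarrow> (\<integral>r. sym_direction_integral y r \<partial>lborel)) (at_right 0)"
proof (rule tendsto_at_right_sequentially[where b=1])
  fix S :: "nat \<Rightarrow> real"
  assume S_pos: "\<And>n. 0 < S n" and "\<And>n. S n < 1" and "decseq S" and S_lim: "S \<longlonglongrightarrow> 0"
  have "(\<lambda>n. \<integral>r. indicator {r. S n \<le> \<bar>r\<bar>} r * sym_direction_integral y r \<partial>lborel) \<longlonglongrightarrow> (\<integral>r. sym_direction_integral y r \<partial>lborel)"
  proof (rule integral_dominated_convergence[where w="\<lambda>r. mass * second_difference_majorant r / 2"])
    show "integrable lborel (\<lambda>r. mass * second_difference_majorant r / 2)"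
      using integrable_second_difference_majorant by simp
    show "AE r in lborel. norm (indicator {r. S n \<le> \<bar>r\<bar>} r * sym_direction_integral y r) \<le> mass * second_difference_majorant r / 2" for n
      using abs_sym_direction_integral_le[of y] second_difference_majorant_nonneg by (auto simp: indicator_def)
    show "AE r in lborel. (\<lambda>n. indicator {r. S n \<le> \<bar>r\<bar>} r * sym_direction_integral y r) \<longlonglongrightarrow> sym_direction_integral y r"
      using AE_lborel_singleton[of 0]
    proof (rule AE_mp, intro AE_I2 impI)
      fix r :: real
      assume "r \<noteq> 0"
      then have "eventually (\<lambda>n. S n < \<bar>r\<bar>) sequentially"
        using order_tendstoD(2)[OF S_lim] by simp
      then have "eventually (\<lambda>n. indicator {r. S n \<le> \<bar>r\<bar>} r * sym_direction_integral y r = sym_direction_integral y r) sequentially"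
        by eventually_elim (auto simp: indicator_def)
      then show "(\<lambda>n. indicator {r. S n \<le> \<bar>r\<bar>} r * sym_direction_integral y r) \<longlonglongrightarrow> sym_direction_integral y r"
        by (rule tendsto_eventually)
    qed
  qed simp_all
  then show "(\<lambda>n. pv_trunc s \<mu> \<phi> y (S n)) \<longlonglongrightarrow> (\<integral>r. sym_direction_integral y r \<partial>lborel)"
    using pv_trunc_eq_sym_direction_integral[OF S_pos] by simp
qed simp

lemma pv_trunc_tendsto_As: "(pv_trunc s \<mu> \<phi> y \<longlongrightarrow> As s \<mu> \<phi> y) (at_right 0)"
  using pv_trunc_tendsto tendsto_Lim[OF trivial_limit_at_right_real pv_trunc_tendsto]
  by (simp add: As_def)

lemma borel_measurable_pv_trunc[measurable]: "(\<lambda>y. pv_trunc s \<mu> \<phi> y \<kappa>) \<in> borel_measurable borel"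
  unfolding pv_trunc_def pv_inner_def by measurable

lemma borel_measurable_As[measurable]: "As s \<mu> \<phi> \<in> borel_measurable borel"
proof (rule borel_measurable_LIMSEQ_real[where u="\<lambda>n y. pv_trunc s \<mu> \<phi> y (1 / Suc n)"])
  have "filterlim (\<lambda>n::nat. 1 / real (Suc n)) (at_right 0) sequentially"
    using LIMSEQ_Suc[OF lim_1_over_n] by (intro filterlim_at_withinI) auto
  then show "(\<lambda>n. pv_trunc s \<mu> \<phi> y (1 / Suc n)) \<longlonglongrightarrow> As s \<mu> \<phi> y" for y
    by (rule filterlim_compose[OF pv_trunc_tendsto_As])
qed simp

lemma integrable_nu_star_integrand:
  assumes [measurable]: "\<Omega> \<in> sets borel"
  shows "integrable lborel (\<lambda>r. \<integral>\<theta>. indicator \<Omega> (y + r *\<^sub>R \<theta>) * (1 + \<bar>r\<bar>) powr (-1 - 2 * s) \<partial>\<mu>)"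
proof (rule Bochner_Integration.integrable_bound)
  show "integrable lborel (\<lambda>r. mass * (1 + \<bar>r\<bar>) powr (- (1 + 2 * s)))"
    using integrable_one_plus_abs_powr[of "1 + 2 * s"] s_pos by simp
  show "AE r in lborel. norm (\<integral>\<theta>. indicator \<Omega> (y + r *\<^sub>R \<theta>) * (1 + \<bar>r\<bar>) powr (-1 - 2 * s) \<partial>\<mu>)
      \<le> norm (mass * (1 + \<bar>r\<bar>) powr (- (1 + 2 * s)))"
  proof (rule AE_I2)
    fix r :: real
    have "\<bar>\<integral>\<theta>. indicator \<Omega> (y + r *\<^sub>R \<theta>) * (1 + \<bar>r\<bar>) powr (-1 - 2 * s) \<partial>\<mu>\<bar>
        \<le> (\<integral>\<theta>. (1 + \<bar>r\<bar>) powr (-1 - 2 * s) \<partial>\<mu>)"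
      by (rule abs_integral_le_integral) (auto simp: indicator_def)
    then show "norm (\<integral>\<theta>. indicator \<Omega> (y + r *\<^sub>R \<theta>) * (1 + \<bar>r\<bar>) powr (-1 - 2 * s) \<partial>\<mu>)
      \<le> norm (mass * (1 + \<bar>r\<bar>) powr (- (1 + 2 * s)))"
      by simp
  qed
qed measurable

lemma abs_pv_trunc_le_nu_star:
  assumes \<Omega>[measurable]: "\<Omega> \<in> sets borel" and \<delta>: "0 < \<delta>" and \<kappa>: "0 < \<kappa>"
    and support: "\<And>w. \<phi> w \<noteq> 0 \<Longrightarrow> w \<in> \<Omega> \<and> \<delta> \<le> dist y w"
  shows "\<bar>pv_trunc s \<mu> \<phi> y \<kappa>\<bar> \<le> \<Phi> * ((1 + \<delta>) / \<delta>) powr (1 + 2 * s) * nu_star s \<mu> \<Omega> y"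
proof -
  define K where "K = \<Phi> * ((1 + \<delta>) / \<delta>) powr (1 + 2 * s)"
  define w where "w r \<theta> = indicator \<Omega> (y + r *\<^sub>R \<theta>) * (1 + \<bar>r\<bar>) powr (-1 - 2 * s)" for r \<theta>
  have "K \<ge> 0" using Phi_nonneg by (simp add: K_def)
  have "\<phi> y = 0" using support[of y] \<delta> by force
  have pointwise: "\<bar>pv_inner s \<mu> \<phi> y r \<theta>\<bar> \<le> K * w r \<theta>" if "norm \<theta> = 1" for r \<theta>
  proof (cases "\<phi> (y + r *\<^sub>R \<theta>) = 0")
    case True
    then show ?thesis using \<open>K \<ge> 0\<close> \<open>\<phi> y = 0\<close> by (simp add: pv_inner_def w_def)
  next
    case False
    have "dist y (y + r *\<^sub>R \<theta>) = \<bar>r\<bar>"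
      using that by (simp add: dist_norm)
    with support[OF False] have r: "\<delta> \<le> \<bar>r\<bar>" and "y + r *\<^sub>R \<theta> \<in> \<Omega>"
      by auto
    have "\<bar>pv_inner s \<mu> \<phi> y r \<theta>\<bar> \<le> \<Phi> / \<bar>r\<bar> powr (1 + 2 * s)"
      using \<open>\<phi> y = 0\<close> phi_bound[of "y + r *\<^sub>R \<theta>"] by (simp add: pv_inner_def divide_right_mono)
    also have "\<dots> = \<Phi> * \<bar>r\<bar> powr (- (1 + 2 * s))"
      by (simp add: powr_minus divide_inverse del: minus_add_distrib)
    also have "\<dots> \<le> K * (1 + \<bar>r\<bar>) powr (- (1 + 2 * s))"
      using powr_neg_le_one_plus_powr_neg[OF \<delta> r, of "1 + 2 * s"] s_pos Phi_nonneg
      by (simp add: K_def mult.assoc mult_left_mono)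
    finally show ?thesis using \<open>y + r *\<^sub>R \<theta> \<in> \<Omega>\<close> by (simp add: w_def)
  qed
  have "\<bar>direction_integral y r\<bar> \<le> (\<integral>\<theta>. K * w r \<theta> \<partial>\<mu>)" for r
    unfolding direction_integral_def
  proof (rule abs_integral_le_integral)
    show "integrable \<mu> (\<lambda>\<theta>. K * w r \<theta>)"
      by (rule mu.integrable_const_bound[where B="K * (1 + \<bar>r\<bar>) powr (-1 - 2 * s)"])
         (use \<open>K \<ge> 0\<close> in \<open>auto simp: w_def indicator_def\<close>)
    show "AE \<theta> in \<mu>. \<bar>pv_inner s \<mu> \<phi> y r \<theta>\<bar> \<le> K * w r \<theta>"
      using AE_unit by (rule AE_mp) (auto intro!: AE_I2 pointwise)
  qed
  then have "\<bar>pv_trunc s \<mu> \<phi> y \<kappa>\<bar> \<le> (\<integral>r. K * (\<integral>\<theta>. w r \<theta> \<partial>\<mu>) \<partial>lborel)"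
    unfolding pv_trunc_eq_direction_integral using \<open>K \<ge> 0\<close> integrable_nu_star_integrand[OF \<Omega>, of y]
    by (intro abs_integral_le_integral AE_I2)
       (auto simp: w_def indicator_def abs_mult intro: order_trans[OF _ \<open>\<bar>direction_integral y _\<bar> \<le> _\<close>])
  then show ?thesis by (simp add: K_def w_def nu_star_def)
qed

section \<open>Moving the operator across a convolution\<close>

sublocale P: pair_sigma_finite lborel \<mu>
  by (intro pair_sigma_finite.intro sigma_finite_lborel mu.sigma_finite_measure_axioms)

sublocale Q: pair_sigma_finite lborel "lborel \<Otimes>\<^sub>M \<mu>"
  by (intro pair_sigma_finite.intro sigma_finite_lborel P.sigma_finite_measure_axioms)

lemma integrable_kernel_mult_shift:
  assumes "0 < \<kappa>"
  shows "integrable (lborel \<Otimes>\<^sub>M \<mu>) (\<lambda>p. trunc_kernel s \<kappa> (fst p) * \<phi> (y - fst p *\<^sub>R snd p))"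
proof (rule Bochner_Integration.integrable_bound)
  show "integrable (lborel \<Otimes>\<^sub>M \<mu>) (\<lambda>p. \<Phi> * trunc_kernel s \<kappa> (fst p))"
    using integrable_fst_finite_measure[OF sigma_finite_lborel finite_mu
        integrable_trunc_kernel[OF assms s_pos]] by simp
  show "AE p in lborel \<Otimes>\<^sub>M \<mu>. norm (trunc_kernel s \<kappa> (fst p) * \<phi> (y - fst p *\<^sub>R snd p))
          \<le> norm (\<Phi> * trunc_kernel s \<kappa> (fst p))"
    using phi_bound trunc_kernel_nonneg Phi_nonneg
    by (intro AE_I2) (simp add: abs_mult mult.commute[of \<Phi>] mult_left_mono)
qed measurable

lemma integral_kernel_mult_shift_le_nu_star:
  assumes \<kappa>: "0 < \<kappa>" and \<Omega>[measurable]: "\<Omega> \<in> sets borel"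
    and support: "{w. \<phi> w \<noteq> 0} \<subseteq> \<Omega>"
  shows "(\<integral>p. trunc_kernel s \<kappa> (fst p) * \<phi> (y - fst p *\<^sub>R snd p) \<partial>(lborel \<Otimes>\<^sub>M \<mu>))
           \<le> \<Phi> * ((1 + \<kappa>) / \<kappa>) powr (1 + 2 * s) * nu_star s \<mu> \<Omega> y"
proof -
  define C where "C = \<Phi> * ((1 + \<kappa>) / \<kappa>) powr (1 + 2 * s)"
  define w where "w r \<theta> = indicator \<Omega> (y + r *\<^sub>R \<theta>) * (1 + \<bar>r\<bar>) powr (-1 - 2 * s)" for r \<theta>
  have "0 \<le> C" using Phi_nonneg by (simp add: C_def)
  have pointwise: "trunc_kernel s \<kappa> r * \<phi> (y - r *\<^sub>R \<theta>) \<le> C * w (- r) \<theta>" for r \<theta>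
  proof (cases "\<phi> (y - r *\<^sub>R \<theta>) = 0")
    case True
    then show ?thesis using \<open>0 \<le> C\<close> by (simp add: w_def)
  next
    case False
    have "trunc_kernel s \<kappa> r * \<phi> (y - r *\<^sub>R \<theta>) \<le> (((1 + \<kappa>) / \<kappa>) powr (1 + 2 * s) * (1 + \<bar>r\<bar>) powr (-1 - 2 * s)) * \<Phi>"
      using trunc_kernel_le[OF \<kappa>, of s r] s_pos trunc_kernel_nonneg phi_bound[of "y - r *\<^sub>R \<theta>"] Phi_nonneg
      by (intro order_trans[OF mult_left_mono mult_right_mono]) auto
    moreover have "y - r *\<^sub>R \<theta> \<in> \<Omega>"
      using support False by auto
    ultimately show ?thesis by (simp add: C_def w_def mult_ac)
  qed
  have "(\<integral>p. trunc_kernel s \<kappa> (fst p) * \<phi> (y - fst p *\<^sub>R snd p) \<partial>(lborel \<Otimes>\<^sub>M \<mu>))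
      = (\<integral>r. \<integral>\<theta>. trunc_kernel s \<kappa> r * \<phi> (y - r *\<^sub>R \<theta>) \<partial>\<mu> \<partial>lborel)"
    using P.integral_fst'[OF integrable_kernel_mult_shift[OF \<kappa>]] by simp
  also have "\<dots> \<le> (\<integral>r. C * (\<integral>\<theta>. w (- r) \<theta> \<partial>\<mu>) \<partial>lborel)"
  proof (rule integral_mono')
    have "integrable lborel (\<lambda>r. C * (\<integral>\<theta>. w (0 + (-1) * r) \<theta> \<partial>\<mu>))"
      using lborel_integrable_real_affine[OF integrable_nu_star_integrand[OF \<Omega>, of y], of "-1" 0]
      by (simp add: w_def)
    then show "integrable lborel (\<lambda>r. C * (\<integral>\<theta>. w (- r) \<theta> \<partial>\<mu>))"
      by simp
    show "0 \<le> C * (\<integral>\<theta>. w (- r) \<theta> \<partial>\<mu>)" for r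
      using \<open>0 \<le> C\<close> by (simp add: w_def)
    show "(\<integral>\<theta>. trunc_kernel s \<kappa> r * \<phi> (y - r *\<^sub>R \<theta>) \<partial>\<mu>) \<le> C * (\<integral>\<theta>. w (- r) \<theta> \<partial>\<mu>)" for r
    proof -
      have "(\<integral>\<theta>. trunc_kernel s \<kappa> r * \<phi> (y - r *\<^sub>R \<theta>) \<partial>\<mu>) \<le> (\<integral>\<theta>. C * w (- r) \<theta> \<partial>\<mu>)"
        by (rule integral_mono'[OF mu.integrable_const_bound[where B="C * (1 + \<bar>r\<bar>) powr (-1 - 2 * s)"]])
           (use \<open>0 \<le> C\<close> pointwise in \<open>auto simp: w_def indicator_def\<close>)
      then show ?thesis by simp
    qed
  qed
  also have "\<dots> = C * (\<integral>r. (\<integral>\<theta>. w r \<theta> \<partial>\<mu>) \<partial>lborel)"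
    using lborel_integral_real_affine[of "-1" "\<lambda>r. \<integral>\<theta>. w r \<theta> \<partial>\<mu>" 0] by simp
  finally show ?thesis by (simp add: C_def w_def nu_star_def)
qed

lemma integrable_kernel_difference:
  assumes "0 < \<kappa>"
  shows "integrable (lborel \<Otimes>\<^sub>M \<mu>) (\<lambda>p. trunc_kernel s \<kappa> (fst p) * (\<phi> y - \<phi> (y - fst p *\<^sub>R snd p)))"
proof -
  have "integrable (lborel \<Otimes>\<^sub>M \<mu>)
      (\<lambda>p. \<phi> y * trunc_kernel s \<kappa> (fst p) - trunc_kernel s \<kappa> (fst p) * \<phi> (y - fst p *\<^sub>R snd p))"
    using integrable_fst_finite_measure[OF sigma_finite_lborel finite_mu integrable_trunc_kernel[OF assms s_pos]]
      integrable_kernel_mult_shift[OF assms]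
    by (intro Bochner_Integration.integrable_diff integrable_mult_right)
  then show ?thesis
    by (simp add: algebra_simps)
qed

lemma integral_kernel_difference_eq_pv_trunc:
  assumes "0 < \<kappa>"
  shows "(\<integral>p. trunc_kernel s \<kappa> (fst p) * (\<phi> y - \<phi> (y - fst p *\<^sub>R snd p)) \<partial>(lborel \<Otimes>\<^sub>M \<mu>))
           = pv_trunc s \<mu> \<phi> y \<kappa>"
  using P.integral_fst'[OF integrable_kernel_difference[OF assms]]
  by (simp add: pv_trunc_eq_trunc_kernel_reflected)

lemma integral_abs_kernel_difference_le:
  assumes \<kappa>: "0 < \<kappa>" and \<Omega>: "\<Omega> \<in> sets borel"
    and nonneg: "\<And>w. 0 \<le> \<phi> w" and support: "{w. \<phi> w \<noteq> 0} \<subseteq> \<Omega>"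
  shows "(\<integral>p. \<bar>trunc_kernel s \<kappa> (fst p) * (\<phi> y - \<phi> (y - fst p *\<^sub>R snd p))\<bar> \<partial>(lborel \<Otimes>\<^sub>M \<mu>))
           \<le> \<Phi> * (\<integral>p. trunc_kernel s \<kappa> (fst p) \<partial>(lborel \<Otimes>\<^sub>M \<mu>)) * indicator \<Omega> y
             + \<Phi> * ((1 + \<kappa>) / \<kappa>) powr (1 + 2 * s) * nu_star s \<mu> \<Omega> y"
proof -
  define k where "k p = trunc_kernel s \<kappa> (fst p)" for p :: "real \<times> 'a"
  have k_int: "integrable (lborel \<Otimes>\<^sub>M \<mu>) k"
    unfolding k_def
    by (rule integrable_fst_finite_measure[OF sigma_finite_lborel finite_mu integrable_trunc_kernel[OF \<kappa> s_pos]])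
  have shift_int: "integrable (lborel \<Otimes>\<^sub>M \<mu>) (\<lambda>p. k p * \<phi> (y - fst p *\<^sub>R snd p))"
    unfolding k_def by (rule integrable_kernel_mult_shift[OF \<kappa>])
  have "(\<integral>p. \<bar>k p * (\<phi> y - \<phi> (y - fst p *\<^sub>R snd p))\<bar> \<partial>(lborel \<Otimes>\<^sub>M \<mu>))
      \<le> (\<integral>p. \<phi> y * k p + k p * \<phi> (y - fst p *\<^sub>R snd p) \<partial>(lborel \<Otimes>\<^sub>M \<mu>))"
  proof (rule integral_mono')
    show "integrable (lborel \<Otimes>\<^sub>M \<mu>) (\<lambda>p. \<phi> y * k p + k p * \<phi> (y - fst p *\<^sub>R snd p))"
      using k_int shift_int by (intro Bochner_Integration.integrable_add integrable_mult_right)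
    show "0 \<le> \<phi> y * k p + k p * \<phi> (y - fst p *\<^sub>R snd p)" for p
      using nonneg by (simp add: k_def trunc_kernel_nonneg)
    show "\<bar>k p * (\<phi> y - \<phi> (y - fst p *\<^sub>R snd p))\<bar> \<le> \<phi> y * k p + k p * \<phi> (y - fst p *\<^sub>R snd p)" for p
    proof -
      have "\<bar>\<phi> y - \<phi> (y - fst p *\<^sub>R snd p)\<bar> \<le> \<phi> y + \<phi> (y - fst p *\<^sub>R snd p)"
        using nonneg[of y] nonneg[of "y - fst p *\<^sub>R snd p"] by linarith
      then have "k p * \<bar>\<phi> y - \<phi> (y - fst p *\<^sub>R snd p)\<bar> \<le> k p * (\<phi> y + \<phi> (y - fst p *\<^sub>R snd p))"
        by (rule mult_left_mono) (simp add: k_def trunc_kernel_nonneg)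
      then show ?thesis
        by (simp add: k_def abs_mult trunc_kernel_nonneg) (simp add: algebra_simps)
    qed
  qed
  also have "\<dots> = \<phi> y * (\<integral>p. k p \<partial>(lborel \<Otimes>\<^sub>M \<mu>)) + (\<integral>p. k p * \<phi> (y - fst p *\<^sub>R snd p) \<partial>(lborel \<Otimes>\<^sub>M \<mu>))"
    using k_int shift_int by simp
  also have "\<dots> \<le> \<Phi> * (\<integral>p. k p \<partial>(lborel \<Otimes>\<^sub>M \<mu>)) * indicator \<Omega> y
      + \<Phi> * ((1 + \<kappa>) / \<kappa>) powr (1 + 2 * s) * nu_star s \<mu> \<Omega> y"
  proof (rule add_mono)
    have "\<phi> y \<le> \<Phi> * indicator \<Omega> y"
      using phi_bound[of y] support Phi_nonneg by (cases "\<phi> y = 0") auto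
    then have "\<phi> y * (\<integral>p. k p \<partial>(lborel \<Otimes>\<^sub>M \<mu>)) \<le> (\<Phi> * indicator \<Omega> y) * (\<integral>p. k p \<partial>(lborel \<Otimes>\<^sub>M \<mu>))"
      by (rule mult_right_mono) (simp add: k_def trunc_kernel_nonneg)
    then show "\<phi> y * (\<integral>p. k p \<partial>(lborel \<Otimes>\<^sub>M \<mu>)) \<le> \<Phi> * (\<integral>p. k p \<partial>(lborel \<Otimes>\<^sub>M \<mu>)) * indicator \<Omega> y"
      by (simp add: mult_ac)
    show "(\<integral>p. k p * \<phi> (y - fst p *\<^sub>R snd p) \<partial>(lborel \<Otimes>\<^sub>M \<mu>))
        \<le> \<Phi> * ((1 + \<kappa>) / \<kappa>) powr (1 + 2 * s) * nu_star s \<mu> \<Omega> y"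
      unfolding k_def by (rule integral_kernel_mult_shift_le_nu_star[OF \<kappa> \<Omega> support])
  qed
  finally show ?thesis by (simp add: k_def)
qed

lemma integrable_kernel_convolution_difference:
  assumes \<kappa>: "0 < \<kappa>" and \<Omega>[measurable]: "\<Omega> \<in> sets borel"
    and ub[measurable]: "ub \<in> borel_measurable borel"
    and nonneg: "\<And>w. 0 \<le> \<phi> w" and support: "{w. \<phi> w \<noteq> 0} \<subseteq> \<Omega>"
    and int_\<Omega>: "integrable lborel (\<lambda>y. indicator \<Omega> y * ub y)"
    and int_nu: "integrable lborel (\<lambda>y. nu_star s \<mu> \<Omega> y * ub y)"
  shows "integrable (lborel \<Otimes>\<^sub>M (lborel \<Otimes>\<^sub>M \<mu>))
           (\<lambda>(y, p). trunc_kernel s \<kappa> (fst p) * (ub y * (\<phi> y - \<phi> (y - fst p *\<^sub>R snd p))))"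
proof (rule Q.Fubini_integrable)
  define d where "d y p = trunc_kernel s \<kappa> (fst p) * (\<phi> y - \<phi> (y - fst p *\<^sub>R snd p))" for y p
  define K where "K = \<Phi> * (\<integral>p. trunc_kernel s \<kappa> (fst p) \<partial>(lborel \<Otimes>\<^sub>M \<mu>))"
  define C where "C = \<Phi> * ((1 + \<kappa>) / \<kappa>) powr (1 + 2 * s)"
  have F_eq: "trunc_kernel s \<kappa> (fst p) * (ub y * (\<phi> y - \<phi> (y - fst p *\<^sub>R snd p))) = ub y * d y p" for y p
    by (simp add: d_def)
  show "(\<lambda>(y, p). trunc_kernel s \<kappa> (fst p) * (ub y * (\<phi> y - \<phi> (y - fst p *\<^sub>R snd p))))
          \<in> borel_measurable (lborel \<Otimes>\<^sub>M (lborel \<Otimes>\<^sub>M \<mu>))"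
    by measurable
  show "AE y in lborel. integrable (lborel \<Otimes>\<^sub>M \<mu>)
          (\<lambda>p. case (y, p) of (y, p) \<Rightarrow> trunc_kernel s \<kappa> (fst p) * (ub y * (\<phi> y - \<phi> (y - fst p *\<^sub>R snd p))))"
    unfolding F_eq d_def using integrable_kernel_difference[OF \<kappa>] by simp
  have fiber_bound: "norm (\<integral>p. norm (ub y * d y p) \<partial>(lborel \<Otimes>\<^sub>M \<mu>))
      \<le> norm (K * \<bar>indicator \<Omega> y * ub y\<bar> + C * \<bar>nu_star s \<mu> \<Omega> y * ub y\<bar>)" for y
  proof -
    have "(\<integral>p. norm (ub y * d y p) \<partial>(lborel \<Otimes>\<^sub>M \<mu>)) = \<bar>ub y\<bar> * (\<integral>p. \<bar>d y p\<bar> \<partial>(lborel \<Otimes>\<^sub>M \<mu>))"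
      by (simp add: abs_mult)
    also have "\<dots> \<le> \<bar>ub y\<bar> * (K * indicator \<Omega> y + C * nu_star s \<mu> \<Omega> y)"
      unfolding K_def C_def d_def
      by (rule mult_left_mono[OF integral_abs_kernel_difference_le[OF \<kappa> \<Omega> nonneg support] abs_ge_zero])
    also have "\<dots> = K * \<bar>indicator \<Omega> y * ub y\<bar> + C * \<bar>nu_star s \<mu> \<Omega> y * ub y\<bar>"
      using nu_star_nonneg[of s \<mu> \<Omega> y] by (simp add: abs_mult algebra_simps)
    finally show ?thesis
      using Bochner_Integration.integral_nonneg[of "lborel \<Otimes>\<^sub>M \<mu>" "\<lambda>p. norm (ub y * d y p)"] by simp
  qed
  have "integrable lborel (\<lambda>y. K * \<bar>indicator \<Omega> y * ub y\<bar> + C * \<bar>nu_star s \<mu> \<Omega> y * ub y\<bar>)"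
    using int_\<Omega> int_nu by (intro Bochner_Integration.integrable_add integrable_mult_right integrable_abs)
  then show "integrable lborel (\<lambda>y. \<integral>p. norm (case (y, p) of (y, p) \<Rightarrow>
      trunc_kernel s \<kappa> (fst p) * (ub y * (\<phi> y - \<phi> (y - fst p *\<^sub>R snd p)))) \<partial>(lborel \<Otimes>\<^sub>M \<mu>))"
  proof (rule Bochner_Integration.integrable_bound)
    show "AE y in lborel. norm (\<integral>p. norm (case (y, p) of (y, p) \<Rightarrow>
        trunc_kernel s \<kappa> (fst p) * (ub y * (\<phi> y - \<phi> (y - fst p *\<^sub>R snd p)))) \<partial>(lborel \<Otimes>\<^sub>M \<mu>))
        \<le> norm (K * \<bar>indicator \<Omega> y * ub y\<bar> + C * \<bar>nu_star s \<mu> \<Omega> y * ub y\<bar>)"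
      using fiber_bound by (simp add: F_eq)
  qed measurable
qed

lemma integral_kernel_convolution_difference:
  assumes ub[measurable]: "ub \<in> borel_measurable borel"
    and int_phi: "integrable lborel (\<lambda>y. ub y * \<phi> y)"
    and int: "integrable lborel (\<lambda>y. trunc_kernel s \<kappa> r * (ub y * (\<phi> y - \<phi> (y - r *\<^sub>R \<theta>))))"
  shows "(\<integral>y. trunc_kernel s \<kappa> r * (ub y * (\<phi> y - \<phi> (y - r *\<^sub>R \<theta>))) \<partial>lborel)
           = trunc_kernel s \<kappa> r * ((\<integral>y. ub y * \<phi> y \<partial>lborel) - (\<integral>y. ub y * \<phi> (y - r *\<^sub>R \<theta>) \<partial>lborel))"
proof (cases "trunc_kernel s \<kappa> r = 0")
  case False
  then have "integrable lborel (\<lambda>y. ub y * (\<phi> y - \<phi> (y - r *\<^sub>R \<theta>)))"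
    using int by simp
  then have "integrable lborel (\<lambda>y. ub y * \<phi> y - ub y * \<phi> (y - r *\<^sub>R \<theta>))"
    by (simp add: right_diff_distrib)
  from Bochner_Integration.integrable_diff[OF int_phi this]
  have "integrable lborel (\<lambda>y. ub y * \<phi> (y - r *\<^sub>R \<theta>))"
    by simp
  then show ?thesis
    using int_phi by (simp add: right_diff_distrib)
qed simp

lemma integrable_mult_phi:
  assumes [measurable]: "ub \<in> borel_measurable borel" and support: "{w. \<phi> w \<noteq> 0} \<subseteq> \<Omega>"
    and int_\<Omega>: "integrable lborel (\<lambda>y. indicator \<Omega> y * ub y)"
  shows "integrable lborel (\<lambda>y. ub y * \<phi> y)"
proof (rule Bochner_Integration.integrable_bound[OF integrable_mult_right[OF int_\<Omega>, of \<Phi>]])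
  show "AE y in lborel. norm (ub y * \<phi> y) \<le> norm (\<Phi> * (indicator \<Omega> y * ub y))"
  proof (rule AE_I2)
    fix y
    have "\<bar>\<phi> y\<bar> \<le> \<Phi> * indicator \<Omega> y"
      using phi_bound[of y] support Phi_nonneg by (cases "\<phi> y = 0") auto
    then have "\<bar>ub y\<bar> * \<bar>\<phi> y\<bar> \<le> \<bar>ub y\<bar> * (\<Phi> * indicator \<Omega> y)"
      by (rule mult_left_mono) simp
    then show "norm (ub y * \<phi> y) \<le> norm (\<Phi> * (indicator \<Omega> y * ub y))"
      using Phi_nonneg by (simp add: abs_mult mult_ac)
  qed
qed measurable

lemma integrable_kernel_convolution_increment:
  fixes x :: 'a
  assumes \<kappa>: "0 < \<kappa>" and \<Omega>[measurable]: "\<Omega> \<in> sets borel"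
    and ub[measurable]: "ub \<in> borel_measurable borel"
    and nonneg: "\<And>w. 0 \<le> \<phi> w" and support: "{w. \<phi> w \<noteq> 0} \<subseteq> \<Omega>"
    and int_\<Omega>: "integrable lborel (\<lambda>y. indicator \<Omega> y * ub y)"
    and int_nu: "integrable lborel (\<lambda>y. nu_star s \<mu> \<Omega> y * ub y)"
  defines "m \<equiv> \<lambda>z. \<integral>y. ub y * \<phi> (y + (x - z)) \<partial>lborel"
  shows "AE p in lborel \<Otimes>\<^sub>M \<mu>.
           (\<integral>y. trunc_kernel s \<kappa> (fst p) * (ub y * (\<phi> y - \<phi> (y - fst p *\<^sub>R snd p))) \<partial>lborel)
             = trunc_kernel s \<kappa> (fst p) * (m x - m (x + fst p *\<^sub>R snd p))"
    and "integrable (lborel \<Otimes>\<^sub>M \<mu>) (\<lambda>p. trunc_kernel s \<kappa> (fst p) * (m x - m (x + fst p *\<^sub>R snd p)))"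
proof -
  note F_int = integrable_kernel_convolution_difference[OF assms(1-7)]
  have m_shift: "m (x + r *\<^sub>R \<theta>) = (\<integral>y. ub y * \<phi> (y - r *\<^sub>R \<theta>) \<partial>lborel)" for r \<theta>
  proof -
    have "y + (x - (x + r *\<^sub>R \<theta>)) = y - r *\<^sub>R \<theta>" for y
      by (simp add: algebra_simps)
    then show ?thesis by (simp add: m_def)
  qed
  show F_eq_G: "AE p in lborel \<Otimes>\<^sub>M \<mu>.
      (\<integral>y. trunc_kernel s \<kappa> (fst p) * (ub y * (\<phi> y - \<phi> (y - fst p *\<^sub>R snd p))) \<partial>lborel)
        = trunc_kernel s \<kappa> (fst p) * (m x - m (x + fst p *\<^sub>R snd p))"
    using Q.AE_integrable_snd[OF F_int]
  proof eventually_elim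
    case (elim p)
    then have "integrable lborel (\<lambda>y. trunc_kernel s \<kappa> (fst p) * (ub y * (\<phi> y - \<phi> (y - fst p *\<^sub>R snd p))))"
      by simp
    from integral_kernel_convolution_difference[OF ub integrable_mult_phi[OF ub support int_\<Omega>] this]
    show ?case
      by (simp add: m_shift m_def)
  qed
  have [measurable]: "m \<in> borel_measurable borel"
    unfolding m_def by measurable
  show "integrable (lborel \<Otimes>\<^sub>M \<mu>) (\<lambda>p. trunc_kernel s \<kappa> (fst p) * (m x - m (x + fst p *\<^sub>R snd p)))"
  proof (rule integrable_cong_AE_imp[OF Q.integrable_snd[OF F_int]])
    show "(\<lambda>p. trunc_kernel s \<kappa> (fst p) * (m x - m (x + fst p *\<^sub>R snd p))) \<in> borel_measurable (lborel \<Otimes>\<^sub>M \<mu>)"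
      by measurable
  qed (use F_eq_G in simp)
qed

text \<open>If \<open>\<phi> = \<psi> (x - _)\<close>, then \<open>m\<close> below is the convolution of \<open>ub\<close> with \<open>\<psi>\<close>.\<close>

lemma pv_trunc_convolution:
  fixes x :: 'a
  assumes \<kappa>: "0 < \<kappa>" and \<Omega>[measurable]: "\<Omega> \<in> sets borel"
    and ub[measurable]: "ub \<in> borel_measurable borel"
    and nonneg: "\<And>w. 0 \<le> \<phi> w" and support: "{w. \<phi> w \<noteq> 0} \<subseteq> \<Omega>"
    and int_\<Omega>: "integrable lborel (\<lambda>y. indicator \<Omega> y * ub y)"
    and int_nu: "integrable lborel (\<lambda>y. nu_star s \<mu> \<Omega> y * ub y)"
  defines "m \<equiv> \<lambda>z. \<integral>y. ub y * \<phi> (y + (x - z)) \<partial>lborel"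
  shows "AE r in lborel. \<kappa> \<le> \<bar>r\<bar> \<longrightarrow> integrable \<mu> (pv_inner s \<mu> m x r)"
    and "integrable lborel (\<lambda>r. indicator {r. \<kappa> \<le> \<bar>r\<bar>} r * (\<integral>\<theta>. pv_inner s \<mu> m x r \<theta> \<partial>\<mu>))"
    and "pv_trunc s \<mu> m x \<kappa> = (\<integral>y. ub y * pv_trunc s \<mu> \<phi> y \<kappa> \<partial>lborel)"
proof -
  define F where "F y p = trunc_kernel s \<kappa> (fst p) * (ub y * (\<phi> y - \<phi> (y - fst p *\<^sub>R snd p)))"
    for y and p :: "real \<times> 'a"
  define G where "G p = trunc_kernel s \<kappa> (fst p) * (m x - m (x + fst p *\<^sub>R snd p))" for p :: "real \<times> 'a"
  note increment = integrable_kernel_convolution_increment[OF assms(1-7), of x]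
  have [measurable]: "m \<in> borel_measurable borel"
    unfolding m_def by measurable
  have F_int: "integrable (lborel \<Otimes>\<^sub>M (lborel \<Otimes>\<^sub>M \<mu>)) (\<lambda>(y, p). F y p)"
    unfolding F_def by (rule integrable_kernel_convolution_difference[OF assms(1-7)])
  have F_eq_G: "AE p in lborel \<Otimes>\<^sub>M \<mu>. (\<integral>y. F y p \<partial>lborel) = G p"
    using increment(1) by (simp add: F_def G_def m_def)
  have G_int: "integrable (lborel \<Otimes>\<^sub>M \<mu>) G"
    using increment(2) by (simp add: G_def[abs_def] m_def)
  have pv_inner_eq: "pv_inner s \<mu> m x r = (\<lambda>\<theta>. G (r, \<theta>))" if "\<kappa> \<le> \<bar>r\<bar>" for r
    using that by (auto simp: G_def pv_inner_def trunc_kernel_def fun_eq_iff)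
  show "AE r in lborel. \<kappa> \<le> \<bar>r\<bar> \<longrightarrow> integrable \<mu> (pv_inner s \<mu> m x r)"
    using P.AE_integrable_fst'[OF G_int] by eventually_elim (simp add: pv_inner_eq)
  have indicator_pv_inner: "indicator {r. \<kappa> \<le> \<bar>r\<bar>} r * (\<integral>\<theta>. pv_inner s \<mu> m x r \<theta> \<partial>\<mu>) = (\<integral>\<theta>. G (r, \<theta>) \<partial>\<mu>)" for r
    by (simp add: G_def pv_inner_def trunc_kernel_def)
  show "integrable lborel (\<lambda>r. indicator {r. \<kappa> \<le> \<bar>r\<bar>} r * (\<integral>\<theta>. pv_inner s \<mu> m x r \<theta> \<partial>\<mu>))"
    unfolding indicator_pv_inner by (rule P.integrable_fst'[OF G_int])
  have "pv_trunc s \<mu> m x \<kappa> = (\<integral>r. \<integral>\<theta>. G (r, \<theta>) \<partial>\<mu> \<partial>lborel)"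
    by (simp add: pv_trunc_eq_trunc_kernel G_def)
  also have "\<dots> = (\<integral>p. G p \<partial>(lborel \<Otimes>\<^sub>M \<mu>))"
    by (rule P.integral_fst'[OF G_int])
  also have "\<dots> = (\<integral>p. \<integral>y. F y p \<partial>lborel \<partial>(lborel \<Otimes>\<^sub>M \<mu>))"
    using F_eq_G by (intro integral_cong_AE) (auto simp: F_def G_def elim: AE_mp)
  also have "\<dots> = (\<integral>y. \<integral>p. F y p \<partial>(lborel \<Otimes>\<^sub>M \<mu>) \<partial>lborel)"
    using Q.Fubini_integral[OF F_int] by simp
  also have "\<dots> = (\<integral>y. ub y * pv_trunc s \<mu> \<phi> y \<kappa> \<partial>lborel)"
    using integral_kernel_difference_eq_pv_trunc[OF \<kappa>] by (simp add: F_def mult.left_commute[of _ "ub _"])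
  finally show "pv_trunc s \<mu> m x \<kappa> = (\<integral>y. ub y * pv_trunc s \<mu> \<phi> y \<kappa> \<partial>lborel)" .
qed

lemma pv_trunc_dominated:
  assumes \<Omega>: "\<Omega> \<in> sets borel" and support: "{w. \<phi> w \<noteq> 0} \<subseteq> \<Omega>"
    and \<delta>: "0 < \<delta>" and separated: "\<And>y w. y \<notin> \<Omega> \<Longrightarrow> \<phi> w \<noteq> 0 \<Longrightarrow> \<delta> \<le> dist y w"
    and int_\<Omega>: "integrable lborel (\<lambda>y. indicator \<Omega> y * ub y)"
    and int_nu: "integrable lborel (\<lambda>y. nu_star s \<mu> \<Omega> y * ub y)"
  obtains w where "integrable lborel w" and "\<And>y \<kappa>. 0 < \<kappa> \<Longrightarrow> \<bar>ub y * pv_trunc s \<mu> \<phi> y \<kappa>\<bar> \<le> w y"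
proof -
  obtain C where C: "\<And>y \<kappa>. 0 < \<kappa> \<Longrightarrow> \<bar>pv_trunc s \<mu> \<phi> y \<kappa>\<bar> \<le> C"
    using pv_trunc_bounded by blast
  define C\<delta> where "C\<delta> = \<Phi> * ((1 + \<delta>) / \<delta>) powr (1 + 2 * s)"
  have "0 \<le> C\<delta>" using Phi_nonneg by (simp add: C\<delta>_def)
  have "integrable lborel (\<lambda>y. C * \<bar>indicator \<Omega> y * ub y\<bar> + C\<delta> * \<bar>nu_star s \<mu> \<Omega> y * ub y\<bar>)"
    using int_\<Omega> int_nu by (intro Bochner_Integration.integrable_add integrable_mult_right integrable_abs)
  moreover have "\<bar>ub y * pv_trunc s \<mu> \<phi> y \<kappa>\<bar> \<le> C * \<bar>indicator \<Omega> y * ub y\<bar> + C\<delta> * \<bar>nu_star s \<mu> \<Omega> y * ub y\<bar>"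
    if "0 < \<kappa>" for y \<kappa>
  proof (cases "y \<in> \<Omega>")
    case True
    then have "\<bar>ub y * pv_trunc s \<mu> \<phi> y \<kappa>\<bar> \<le> C * \<bar>indicator \<Omega> y * ub y\<bar>"
      using C[OF that, of y] by (simp add: abs_mult mult.commute[of C] mult_left_mono)
    then show ?thesis using \<open>0 \<le> C\<delta>\<close> by (simp add: add_increasing2)
  next
    case False
    have "\<bar>pv_trunc s \<mu> \<phi> y \<kappa>\<bar> \<le> C\<delta> * nu_star s \<mu> \<Omega> y"
      unfolding C\<delta>_def using False support separated
      by (intro abs_pv_trunc_le_nu_star[OF \<Omega> \<delta> that]) auto
    then have "\<bar>ub y\<bar> * \<bar>pv_trunc s \<mu> \<phi> y \<kappa>\<bar> \<le> \<bar>ub y\<bar> * (C\<delta> * nu_star s \<mu> \<Omega> y)"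
      by (rule mult_left_mono) simp
    then show ?thesis
      using False nu_star_nonneg[of s \<mu> \<Omega> y] by (simp add: abs_mult mult_ac)
  qed
  ultimately show ?thesis
    using that by blast
qed

lemma has_As_convolution:
  fixes x :: 'a
  assumes \<Omega>[measurable]: "\<Omega> \<in> sets borel" and ub[measurable]: "ub \<in> borel_measurable borel"
    and nonneg: "\<And>w. 0 \<le> \<phi> w" and support: "{w. \<phi> w \<noteq> 0} \<subseteq> \<Omega>"
    and \<delta>: "0 < \<delta>" and separated: "\<And>y w. y \<notin> \<Omega> \<Longrightarrow> \<phi> w \<noteq> 0 \<Longrightarrow> \<delta> \<le> dist y w"
    and int_\<Omega>: "integrable lborel (\<lambda>y. indicator \<Omega> y * ub y)"
    and int_nu: "integrable lborel (\<lambda>y. nu_star s \<mu> \<Omega> y * ub y)"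
  shows "has_As s \<mu> (\<lambda>z. \<integral>y. ub y * \<phi> (y + (x - z)) \<partial>lborel) x (\<integral>y. ub y * As s \<mu> \<phi> y \<partial>lborel)"
proof -
  note convolution = pv_trunc_convolution[OF _ \<Omega> ub nonneg support int_\<Omega> int_nu, of _ x]
  obtain w where w_int: "integrable lborel w"
    and bound: "\<And>y \<kappa>. 0 < \<kappa> \<Longrightarrow> \<bar>ub y * pv_trunc s \<mu> \<phi> y \<kappa>\<bar> \<le> w y"
    using pv_trunc_dominated[OF \<Omega> support \<delta> separated int_\<Omega> int_nu] by blast
  have "((\<lambda>\<kappa>. \<integral>y. ub y * pv_trunc s \<mu> \<phi> y \<kappa> \<partial>lborel) \<longlongrightarrow> (\<integral>y. ub y * As s \<mu> \<phi> y \<partial>lborel)) (at_right 0)"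
  proof (rule tendsto_at_right_sequentially[where b=1])
    fix S :: "nat \<Rightarrow> real"
    assume S_pos: "\<And>n. 0 < S n" and "\<And>n. S n < 1" "decseq S" and S_lim: "S \<longlonglongrightarrow> 0"
    have S_filterlim: "filterlim S (at_right 0) sequentially"
      using S_lim S_pos by (intro filterlim_at_withinI) auto
    show "(\<lambda>n. \<integral>y. ub y * pv_trunc s \<mu> \<phi> y (S n) \<partial>lborel) \<longlonglongrightarrow> (\<integral>y. ub y * As s \<mu> \<phi> y \<partial>lborel)"
    proof (rule integral_dominated_convergence[OF _ _ w_int])
      show "AE y in lborel. norm (ub y * pv_trunc s \<mu> \<phi> y (S n)) \<le> w y" for n
        using bound[OF S_pos] by simp
      show "AE y in lborel. (\<lambda>n. ub y * pv_trunc s \<mu> \<phi> y (S n)) \<longlonglongrightarrow> ub y * As s \<mu> \<phi> y"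
        by (intro AE_I2 tendsto_mult_left filterlim_compose[OF pv_trunc_tendsto_As S_filterlim])
    qed measurable
  qed simp
  moreover have "eventually (\<lambda>\<kappa>. (\<integral>y. ub y * pv_trunc s \<mu> \<phi> y \<kappa> \<partial>lborel)
      = pv_trunc s \<mu> (\<lambda>z. \<integral>y. ub y * \<phi> (y + (x - z)) \<partial>lborel) x \<kappa>) (at_right 0)"
    using eventually_at_right_less[of "0::real"] by eventually_elim (simp add: convolution(3))
  ultimately show ?thesis
    unfolding has_As_def using convolution(1,2) by (simp add: tendsto_cong)
qed

end

section \<open>Mollification\<close>

lemma integrable_lebesgue_mult_iff_lborel:
  fixes u ub f :: "'a::euclidean_space \<Rightarrow> real"
  assumes "u \<in> borel_measurable lebesgue" and [measurable]: "ub \<in> borel_measurable borel"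
    and "AE y in lborel. u y = ub y" and [measurable]: "f \<in> borel_measurable borel"
  shows "integrable lebesgue (\<lambda>y. f y * u y) \<longleftrightarrow> integrable lborel (\<lambda>y. f y * ub y)"
proof -
  have "(\<lambda>y. f y * u y) \<in> borel_measurable lebesgue"
    using assms(1) measurable_completion[of f lborel borel] by simp
  moreover have "AE y in lebesgue. f y * u y = f y * ub y"
    using AE_completion[OF assms(3)] by (auto elim: AE_mp)
  ultimately show ?thesis
    using integrable_cong_AE[of "\<lambda>y. f y * u y" lebesgue "\<lambda>y. f y * ub y"]
      integrable_completion[of "\<lambda>y. f y * ub y" lborel]
    by (simp add: measurable_completion)
qed

lemma integral_lebesgue_mult_eq_lborel:
  fixes u ub f :: "'a::euclidean_space \<Rightarrow> real"
  assumes "u \<in> borel_measurable lebesgue" and [measurable]: "ub \<in> borel_measurable borel"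
    and "AE y in lborel. u y = ub y" and [measurable]: "f \<in> borel_measurable borel"
  shows "(\<integral>y. f y * u y \<partial>lebesgue) = (\<integral>y. f y * ub y \<partial>lborel)"
proof -
  have "(\<lambda>y. f y * u y) \<in> borel_measurable lebesgue"
    using assms(1) measurable_completion[of f lborel borel] by simp
  moreover have "AE y in lebesgue. f y * u y = f y * ub y"
    using AE_completion[OF assms(3)] by (auto elim: AE_mp)
  ultimately show ?thesis
    using integral_cong_AE[of "\<lambda>y. f y * u y" lebesgue "\<lambda>y. f y * ub y"]
      integral_completion[of "\<lambda>y. f y * ub y" lborel]
    by (simp add: measurable_completion)
qed

text \<open>Fubini on products of \<open>lborel\<close> needs Borel measurable integrands, while \<open>u\<close> is only
  Lebesgue measurable.\<close>

lemma borel_representative_integrable: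
  fixes u w :: "'a::euclidean_space \<Rightarrow> real"
  assumes u: "u \<in> borel_measurable lebesgue" and [measurable]: "\<Omega> \<in> sets borel"
    and w[measurable]: "w \<in> borel_measurable borel"
    and int_\<Omega>: "set_integrable lebesgue \<Omega> u" and int_w: "integrable lebesgue (\<lambda>x. w x * u x)"
  obtains ub where "ub \<in> borel_measurable borel" and "AE y in lborel. u y = ub y"
    and "integrable lborel (\<lambda>y. indicator \<Omega> y * ub y)" and "integrable lborel (\<lambda>y. w y * ub y)"
proof -
  obtain ub where "ub \<in> borel_measurable lborel" and u_ub: "AE y in lborel. u y = ub y"
    using completion_ex_borel_measurable_real[OF u] by blast
  then have ub: "ub \<in> borel_measurable borel"
    by simp
  show ?thesis
    using that[OF ub u_ub] int_\<Omega> int_w integrable_lebesgue_mult_iff_lborel[OF u ub u_ub]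
    by (simp add: set_integrable_def)
qed

lemma borel_measurable_nu_star:
  assumes [measurable_cong]: "sets \<mu> = sets borel" and "finite_measure \<mu>"
    and [measurable]: "\<Omega> \<in> sets borel"
  shows "nu_star s \<mu> \<Omega> \<in> borel_measurable borel"
proof -
  interpret finite_measure \<mu> by fact
  show ?thesis
    unfolding nu_star_def[abs_def] by measurable
qed

lemma ball_infdist_frontier_subset:
  fixes x :: "'a::real_normed_vector"
  assumes "x \<in> \<Omega>"
  shows "ball x (infdist x (frontier \<Omega>)) \<subseteq> \<Omega>"
proof
  fix z assume z: "z \<in> ball x (infdist x (frontier \<Omega>))"
  show "z \<in> \<Omega>"
  proof (rule ccontr)
    assume "z \<notin> \<Omega>"
    have "x \<in> ball x (infdist x (frontier \<Omega>))"
      using z by (metis centre_in_ball mem_ball zero_le_dist le_less_trans)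
    then have "ball x (infdist x (frontier \<Omega>)) \<inter> \<Omega> \<noteq> {}"
      using assms by blast
    moreover have "ball x (infdist x (frontier \<Omega>)) - \<Omega> \<noteq> {}"
      using z \<open>z \<notin> \<Omega>\<close> by blast
    ultimately have "ball x (infdist x (frontier \<Omega>)) \<inter> frontier \<Omega> \<noteq> {}"
      by (rule connected_Int_frontier[OF connected_ball])
    then obtain w where "w \<in> frontier \<Omega>" "dist x w < infdist x (frontier \<Omega>)" by auto
    with infdist_le[OF this(1), of x] show False by linarith
  qed
qed

lemma nonzero_set_subset_interior_tsupp:
  fixes f :: "'a::real_normed_vector \<Rightarrow> real"
  assumes "continuous_on UNIV f"
  shows "{w. f w \<noteq> 0} \<subseteq> interior (tsupp f)"
  unfolding tsupp_def
  by (rule interior_maximal[OF closure_subset open_Collect_neq[OF assms continuous_on_const]])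

lemma mollify_nonpos_outside:
  fixes u \<eta> :: "'a::euclidean_space \<Rightarrow> real"
  assumes u_ext: "AE y in lebesgue. y \<notin> \<Omega> \<longrightarrow> u y \<le> 0"
    and \<eta>_nonneg: "\<And>w. 0 \<le> \<eta> w" and \<eta>_support: "{w. \<eta> w \<noteq> 0} \<subseteq> ball 0 1"
    and \<epsilon>: "0 < \<epsilon>" and x: "\<epsilon> \<le> infdist x \<Omega>"
  shows "mollify \<eta> \<epsilon> u x \<le> 0"
proof -
  have "AE y in lebesgue. 0 \<le> - (u y * (\<epsilon> powr (- real DIM('a)) * \<eta> ((1 / \<epsilon>) *\<^sub>R (x - y))))"
    using u_ext
  proof eventually_elim
    case (elim y)
    show ?case
    proof (cases "y \<in> \<Omega>")
      case True
      then have "\<epsilon> \<le> norm (x - y)"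
        using infdist_le[OF True, of x] x by (simp add: dist_norm)
      then have "1 \<le> norm ((1 / \<epsilon>) *\<^sub>R (x - y))"
        using \<epsilon> by (simp del: scaleR_right_diff_distrib)
      then have "\<eta> ((1 / \<epsilon>) *\<^sub>R (x - y)) = 0"
        using \<eta>_support by (force simp: subset_iff)
      then show ?thesis by simp
    next
      case False
      then show ?thesis
        using elim \<eta>_nonneg[of "(1 / \<epsilon>) *\<^sub>R (x - y)"] by (simp add: mult_nonpos_nonneg)
    qed
  qed
  then have "0 \<le> (\<integral>y. - (u y * (\<epsilon> powr (- real DIM('a)) * \<eta> ((1 / \<epsilon>) *\<^sub>R (x - y)))) \<partial>lebesgue)"
    by (rule integral_nonneg_AE)
  then show ?thesis
    by (simp add: mollify_def)
qed

lemma mollify_eq_lborel_convolution: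
  fixes u ub \<eta> :: "'a::euclidean_space \<Rightarrow> real"
  assumes "u \<in> borel_measurable lebesgue" and [measurable]: "ub \<in> borel_measurable borel"
    and "AE y in lborel. u y = ub y" and [measurable]: "\<eta> \<in> borel_measurable borel"
  shows "mollify \<eta> \<epsilon> u z = (\<integral>y. ub y * (\<epsilon> powr (- real DIM('a)) * \<eta> ((1 / \<epsilon>) *\<^sub>R (z - y))) \<partial>lborel)"
  using integral_lebesgue_mult_eq_lborel[OF assms(1-3),
      of "\<lambda>y. \<epsilon> powr (- real DIM('a)) * \<eta> ((1 / \<epsilon>) *\<^sub>R (z - y))"]
  by (simp add: mollify_def mult.commute)

lemma mollifier_kernel:
  fixes \<eta> :: "'a::euclidean_space \<Rightarrow> real" and x :: 'a
  assumes \<eta>_smooth: "C_inf \<eta>" and \<eta>_nonneg: "\<And>w. 0 \<le> \<eta> w"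
    and \<eta>_support: "{w. \<eta> w \<noteq> 0} \<subseteq> ball 0 1" and \<epsilon>: "0 < \<epsilon>"
  defines "\<phi> \<equiv> \<lambda>y. \<epsilon> powr (- real DIM('a)) * \<eta> ((1 / \<epsilon>) *\<^sub>R (x - y))"
  shows "C_inf \<phi>" and "\<And>w. 0 \<le> \<phi> w" and support: "\<And>w. \<phi> w \<noteq> 0 \<Longrightarrow> dist x w < \<epsilon>"
    and vanish: "\<And>w. w \<notin> cball x \<epsilon> \<Longrightarrow> \<phi> w = 0"
    and "cball x \<epsilon> \<subseteq> \<Omega> \<Longrightarrow> Cc_inf \<Omega> \<phi>"
proof -
  show smooth: "C_inf \<phi>"
    unfolding \<phi>_def by (rule C_inf_scaled_reflection[OF \<eta>_smooth])
  show "0 \<le> \<phi> w" for w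
    using \<eta>_nonneg by (simp add: \<phi>_def)
  show support: "dist x w < \<epsilon>" if "\<phi> w \<noteq> 0" for w
  proof -
    have "\<eta> ((1 / \<epsilon>) *\<^sub>R (x - w)) \<noteq> 0"
      using that by (simp add: \<phi>_def)
    then have "norm ((1 / \<epsilon>) *\<^sub>R (x - w)) < 1"
      using \<eta>_support by auto
    then show ?thesis
      using \<epsilon> by (simp add: dist_norm del: scaleR_right_diff_distrib)
  qed
  then show vanish: "\<phi> w = 0" if "w \<notin> cball x \<epsilon>" for w
    using that by force
  have "tsupp \<phi> \<subseteq> cball x \<epsilon>"
    unfolding tsupp_def using vanish by (intro closure_minimal) (auto simp: subset_iff)
  moreover have "compact (tsupp \<phi>)"
    using bounded_subset[OF bounded_cball \<open>tsupp \<phi> \<subseteq> cball x \<epsilon>\<close>]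
    by (simp add: compact_eq_bounded_closed tsupp_def)
  ultimately show "cball x \<epsilon> \<subseteq> \<Omega> \<Longrightarrow> Cc_inf \<Omega> \<phi>"
    using smooth by (auto simp: Cc_inf_def)
qed

lemma C_inf_compact_support_bounded_second_difference:
  fixes \<phi> :: "'a::euclidean_space \<Rightarrow> real"
  assumes "0 < s" "s < 1" "sets \<mu> = sets borel" "finite_measure \<mu>" "AE \<theta> in \<mu>. norm \<theta> = 1"
    and smooth: "C_inf \<phi>" and "compact K" and vanish: "\<And>w. w \<notin> K \<Longrightarrow> \<phi> w = 0"
  obtains \<Phi> M where "bounded_second_difference s \<mu> \<phi> \<Phi> M"
proof -
  have "continuous_on UNIV \<phi>" and "Ck 2 \<phi>"
    using smooth by (simp_all add: C_inf_def flip: Ck.simps(1))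
  obtain \<Phi> where "\<And>z. \<bar>\<phi> z\<bar> \<le> \<Phi>"
    using bounded_range_vanishing_outside_compact[OF \<open>continuous_on UNIV \<phi>\<close> \<open>compact K\<close> vanish]
    unfolding bounded_iff by fastforce
  moreover obtain M where
    "\<And>y r \<theta>. \<bar>\<phi> (y + r *\<^sub>R \<theta>) + \<phi> (y - r *\<^sub>R \<theta>) - 2 * \<phi> y\<bar> \<le> M * (norm \<theta>)\<^sup>2 * r\<^sup>2"
    using Ck2_vanishing_outside_compact_second_difference_le[OF \<open>Ck 2 \<phi>\<close> \<open>compact K\<close> vanish]
    by blast
  moreover have "\<phi> \<in> borel_measurable borel"
    using \<open>continuous_on UNIV \<phi>\<close> by (rule borel_measurable_continuous_onI)
  ultimately show ?thesis
    using that assms(1-5) by (blast intro: bounded_second_difference.intro)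
qed

lemma has_As_mollify_nonpos:
  fixes \<mu> :: "'a::euclidean_space measure" and u \<eta> :: "'a \<Rightarrow> real"
  assumes s: "0 < s" "s < 1"
    and sets_mu[measurable_cong]: "sets \<mu> = sets borel" and finite_mu: "finite_measure \<mu>"
    and AE_unit: "AE \<theta> in \<mu>. norm \<theta> = 1"
    and \<Omega>: "open \<Omega>"
    and u_meas: "u \<in> borel_measurable lebesgue"
    and u_L1: "set_integrable lebesgue \<Omega> u"
    and u_L1w: "integrable lebesgue (\<lambda>x. nu_star s \<mu> \<Omega> x * u x)"
    and u_sub: "\<And>\<phi>. Cc_inf \<Omega> \<phi> \<Longrightarrow> (\<forall>x. \<phi> x \<ge> 0) \<Longrightarrow> (\<integral>x. u x * As s \<mu> \<phi> x \<partial>lebesgue) \<le> 0"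
    and \<eta>_smooth: "C_inf \<eta>" and \<eta>_nonneg: "\<And>w. 0 \<le> \<eta> w"
    and \<eta>_support: "{w. \<eta> w \<noteq> 0} \<subseteq> ball 0 1"
    and \<epsilon>: "0 < \<epsilon>" and x: "x \<in> inner_set \<Omega> \<epsilon>"
  shows "\<exists>L. has_As s \<mu> (mollify \<eta> \<epsilon> u) x L \<and> L \<le> 0"
proof -
  have \<Omega>_sets[measurable]: "\<Omega> \<in> sets borel"
    using \<Omega> by auto
  define d where "d = infdist x (frontier \<Omega>)"
  have "\<epsilon> < d" and "ball x d \<subseteq> \<Omega>"
    using x ball_infdist_frontier_subset by (auto simp: inner_set_def d_def)
  define \<phi> where "\<phi> y = \<epsilon> powr (- real DIM('a)) * \<eta> ((1 / \<epsilon>) *\<^sub>R (x - y))" for y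
  note \<phi> = mollifier_kernel[where \<eta>=\<eta> and \<epsilon>=\<epsilon> and x=x, OF \<eta>_smooth \<eta>_nonneg \<eta>_support \<epsilon>,
      folded \<phi>_def[abs_def] \<phi>_def]
  obtain \<Phi> M where "bounded_second_difference s \<mu> \<phi> \<Phi> M"
    using C_inf_compact_support_bounded_second_difference[OF s sets_mu finite_mu AE_unit \<phi>(1)
        compact_cball \<phi>(4)] by blast
  then interpret bounded_second_difference s \<mu> \<phi> \<Phi> M .
  obtain ub where ub[measurable]: "ub \<in> borel_measurable borel" and u_ub: "AE y in lborel. u y = ub y"
    and int_\<Omega>: "integrable lborel (\<lambda>y. indicator \<Omega> y * ub y)"
    and int_nu: "integrable lborel (\<lambda>y. nu_star s \<mu> \<Omega> y * ub y)"
    using borel_representative_integrable[OF u_meas \<Omega>_sets borel_measurable_nu_star[OF sets_mu finite_mu \<Omega>_sets]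
        u_L1 u_L1w] by blast
  have support: "{w. \<phi> w \<noteq> 0} \<subseteq> \<Omega>"
    using \<phi>(3) \<open>\<epsilon> < d\<close> \<open>ball x d \<subseteq> \<Omega>\<close> by fastforce
  have separated: "d - \<epsilon> \<le> dist y w" if "y \<notin> \<Omega>" "\<phi> w \<noteq> 0" for y w
  proof -
    have "d \<le> dist x y"
      using \<open>ball x d \<subseteq> \<Omega>\<close> that(1) by (auto simp: subset_iff not_less[symmetric])
    then show ?thesis
      using \<phi>(3)[OF that(2)] dist_triangle[of x y w] by (simp add: dist_commute)
  qed
  have "has_As s \<mu> (\<lambda>z. \<integral>y. ub y * \<phi> (y + (x - z)) \<partial>lborel) x (\<integral>y. ub y * As s \<mu> \<phi> y \<partial>lborel)"
    using \<open>\<epsilon> < d\<close>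
    by (intro has_As_convolution[OF \<Omega>_sets ub \<phi>(2) support _ separated int_\<Omega> int_nu]) simp_all
  moreover have "mollify \<eta> \<epsilon> u = (\<lambda>z. \<integral>y. ub y * \<phi> (y + (x - z)) \<partial>lborel)"
  proof
    fix z
    have "x - (y + (x - z)) = z - y" for y
      by (simp add: algebra_simps)
    moreover have "\<eta> \<in> borel_measurable borel"
      using \<eta>_smooth by (intro borel_measurable_continuous_onI) (simp add: C_inf_def flip: Ck.simps(1))
    ultimately show "mollify \<eta> \<epsilon> u z = (\<integral>y. ub y * \<phi> (y + (x - z)) \<partial>lborel)"
      using mollify_eq_lborel_convolution[OF u_meas ub u_ub] by (simp add: \<phi>_def)
  qed
  moreover have "(\<integral>y. ub y * As s \<mu> \<phi> y \<partial>lborel) \<le> 0"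
  proof -
    have "cball x \<epsilon> \<subseteq> \<Omega>"
      using \<open>\<epsilon> < d\<close> \<open>ball x d \<subseteq> \<Omega>\<close> by auto
    then have "(\<integral>y. u y * As s \<mu> \<phi> y \<partial>lebesgue) \<le> 0"
      using u_sub \<phi>(2,5) by blast
    then show ?thesis
      using integral_lebesgue_mult_eq_lborel[OF u_meas ub u_ub borel_measurable_As]
      by (simp add: mult.commute)
  qed
  ultimately show ?thesis by auto
qed

theorem lemma2p12:
  fixes s :: real and \<mu> :: "'a::euclidean_space measure" and \<Omega> :: "'a set"
    and u \<eta> :: "'a \<Rightarrow> real" and \<epsilon> :: real
  assumes s: "0 < s" "s < 1"
    and mu_sets: "sets \<mu> = sets borel"
    and mu_fin: "finite_measure \<mu>"
    and mu_sphere: "emeasure \<mu> (UNIV - sphere 0 1) = 0"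
    and dom: "open \<Omega>" "connected \<Omega>" "bounded \<Omega>" "\<Omega> \<noteq> {}"
    and u_meas: "u \<in> borel_measurable lebesgue"
    and u_L1: "set_integrable lebesgue \<Omega> u"
    and u_L1w: "integrable lebesgue (\<lambda>x. nu_star s \<mu> \<Omega> x * u x)"
    and u_sub: "\<And>\<phi>. Cc_inf \<Omega> \<phi> \<Longrightarrow> (\<forall>x. \<phi> x \<ge> 0) \<Longrightarrow>
                  (\<integral>x. u x * As s \<mu> \<phi> x \<partial>lebesgue) \<le> 0"
    and u_ext: "AE x in lebesgue. x \<notin> \<Omega> \<longrightarrow> u x \<le> 0"
    and eta_smooth: "C_inf \<eta>"
    and eta_radial: "\<And>x y. norm x = norm y \<Longrightarrow> \<eta> x = \<eta> y"
    and eta_supp: "tsupp \<eta> = cball 0 1"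
    and eta_nonneg: "\<And>x. \<eta> x \<ge> 0"
    and eta_int: "integrable lebesgue \<eta>" "(\<integral>x. \<eta> x \<partial>lebesgue) = 1"
    and eps: "\<epsilon> > 0"
  shows "(\<forall>x\<in>inner_set \<Omega> \<epsilon>. \<exists>L. has_As s \<mu> (mollify \<eta> \<epsilon> u) x L \<and> L \<le> 0)
       \<and> (\<forall>x. x \<notin> outer_set \<Omega> \<epsilon> \<longrightarrow> mollify \<eta> \<epsilon> u x \<le> 0)"
proof -
  have AE_unit: "AE \<theta> in \<mu>. norm \<theta> = 1"
    using mu_sphere mu_sets by (intro AE_I'[of "UNIV - sphere 0 1"]) (auto simp: null_sets_def)
  have eta_support: "{w. \<eta> w \<noteq> 0} \<subseteq> ball 0 1"
    using nonzero_set_subset_interior_tsupp[of \<eta>] eta_smooth eta_supp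
    by (simp add: C_inf_def flip: Ck.simps(1))
  show ?thesis
    using has_As_mollify_nonpos[OF s mu_sets mu_fin AE_unit dom(1) u_meas u_L1 u_L1w u_sub
        eta_smooth eta_nonneg eta_support eps]
      mollify_nonpos_outside[OF u_ext eta_nonneg eta_support eps]
    by (auto simp: outer_set_def not_less)
qed

end
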